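(* Let $k$ be a positive integer and let $(\lambda^n)_{n\ge1}$ be a sequence of partitions with $\lambda^n\vdash n$ and $\lambda^n_1\le k$, such that for each $1\le i\le k$ the limit $a_i=\lim_{n\to\infty}(\lambda^n)'_i/n$ exists, where $(\lambda^n)'$ is the conjugate partition (so $(\lambda^n)'_i$ is the length of the $i$-th column, $0$ if absent). Then \[\lim_{n\to\infty}\big(s_{\lambda^n}(1^n)\,f^{\lambda^n}\big)^{1/n}=\prod_{i=1}^k\frac{1}{(1-a_i)^{1-a_i}\,a_i^{2a_i}},\] with the convention $0^0=1$.
   Context: For a partition $\lambda$, $f^\lambda$ is the number of standard Young tableaux of shape $\lambda$, and $s_\lambda(1^t)$ is the number of semistandard Young tableaux of shape $\lambda$ with entries in $\{1,\dots,t\}$. *)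

theory Defs
  imports Complex_Main
begin

definition is_partition :: "nat \<Rightarrow> nat list \<Rightarrow> bool" where
  "is_partition n lam \<longleftrightarrow> sorted_wrt (\<ge>) lam \<and> (\<forall>x\<in>set lam. 0 < x) \<and> sum_list lam = n"

text \<open>Young diagram, 0-indexed cells (row, column).\<close>
definition diagram :: "nat list \<Rightarrow> (nat \<times> nat) set" where
  "diagram lam = {(i, j). i < length lam \<and> j < lam ! i}"

text \<open>Conjugate partition, 1-indexed: length of the i-th column (0 if absent).\<close>
definition conj_part :: "nat list \<Rightarrow> nat \<Rightarrow> nat" where
  "conj_part lam i = length (filter (\<lambda>x. i \<le> x) lam)"

text \<open>Semistandard Young tableaux of shape lam with entries in {1..t}
  (functions extended by 0 outside the diagram).\<close>
definition ssyt :: "nat list \<Rightarrow> nat \<Rightarrow> (nat \<times> nat \<Rightarrow> nat) set" where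
  "ssyt lam t = {T. (\<forall>c. c \<notin> diagram lam \<longrightarrow> T c = 0)
     \<and> (\<forall>c\<in>diagram lam. T c \<in> {1..t})
     \<and> (\<forall>i j. (i, Suc j) \<in> diagram lam \<longrightarrow> T (i, j) \<le> T (i, Suc j))
     \<and> (\<forall>i j. (Suc i, j) \<in> diagram lam \<longrightarrow> T (i, j) < T (Suc i, j))}"

text \<open>s_lam(1^t): number of SSYT of shape lam with entries in {1..t}.\<close>
definition schur_ones :: "nat list \<Rightarrow> nat \<Rightarrow> nat" where
  "schur_ones lam t = card (ssyt lam t)"

definition syt :: "nat list \<Rightarrow> (nat \<times> nat \<Rightarrow> nat) set" where
  "syt lam = {T. (\<forall>c. c \<notin> diagram lam \<longrightarrow> T c = 0)
     \<and> bij_betw T (diagram lam) {1..sum_list lam}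
     \<and> (\<forall>i j. (i, Suc j) \<in> diagram lam \<longrightarrow> T (i, j) < T (i, Suc j))
     \<and> (\<forall>i j. (Suc i, j) \<in> diagram lam \<longrightarrow> T (i, j) < T (Suc i, j))}"

definition num_syt :: "nat list \<Rightarrow> nat" where
  "num_syt lam = card (syt lam)"

definition pow0 :: "real \<Rightarrow> real \<Rightarrow> real" where
  "pow0 x y = (if x = 0 then (if y = 0 then 1 else 0) else x powr y)"

end

theory Submission
  imports Defs "Jordan_Normal_Form.Determinant" "HOL-Real_Asymp.Real_Asymp"
begin

text \<open>The product \<open>s * f\<close> of the two counts is squeezed between bounds that agree up to
  factors polynomial in \<open>n\<close>, which disappear under the \<open>n\<close>-th root. Let \<open>c\<^sub>j\<close> be the
  column lengths and \<open>x\<^sub>j = c\<^sub>j / n\<close>.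

  Upper bounds: the columns of a semistandard tableau are \<open>c\<^sub>j\<close>-subsets of \<open>{1..n}\<close>, so
  \<open>s \<le> \<Prod>j. n choose c\<^sub>j\<close>; a standard tableau is determined by the column of each entry, so
  \<open>f * \<Prod>j. p\<^sub>j ^ c\<^sub>j \<le> 1\<close> for every probability vector \<open>p\<close>, in particular for \<open>p\<^sub>j = x\<^sub>j\<close>.

  Lower bounds: Weyl's dimension formula, written as a falling-factorial determinant times
  \<open>\<Prod>j. (t + j)! / ((c\<^sub>j + k - 1 - j)! (t + j - c\<^sub>j)!)\<close>, obeys the same recursion over
  horizontal strips as the number of semistandard tableaux with entries at most \<open>t\<close>; as the
  determinant is a positive integer, that product alone is a lower bound. Standardization embeds
  semistandard tableaux with entries at most \<open>n\<^sup>2\<close> into pairs of a standard tableau and an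
  \<open>n\<close>-subset of \<open>{1..n\<^sup>2 + n}\<close>, which bounds \<open>f\<close> from below.

  Elementary Stirling bounds turn all binomial and multinomial coefficients into the entropy
  factor \<open>\<Prod>j. x\<^sub>j ^ (2 x\<^sub>j) (1 - x\<^sub>j) ^ (1 - x\<^sub>j)\<close> raised to the power \<open>n\<close>.\<close>

section \<open>A falling-factorial Vandermonde determinant\<close>

definition falling_fact :: "real \<Rightarrow> nat \<Rightarrow> real" where
  "falling_fact x q = (\<Prod>m<q. x - real m)"

lemma falling_fact_Suc: "falling_fact x (Suc q) = falling_fact x q * (x - real q)"
  unfolding falling_fact_def by simp

lemma falling_fact_Suc_left: "x * falling_fact (x - 1) q = falling_fact x (Suc q)"
  unfolding falling_fact_def prod.lessThan_Suc_shift by (simp add: algebra_simps)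

lemma falling_fact_of_nat_self: "falling_fact (real n) n = fact n"
proof (induction n)
  case (Suc n)
  have "falling_fact (real (Suc n)) (Suc n) = real (Suc n) * falling_fact (real n) n"
    by (simp flip: falling_fact_Suc_left)
  with Suc show ?case by simp
qed (simp add: falling_fact_def)

lemma falling_fact_of_nat_eq_0: "n < q \<Longrightarrow> falling_fact (real n) q = 0"
  unfolding falling_fact_def by (rule prod_zero) (auto intro!: bexI[where x=n])

lemma falling_fact_Ints: "x \<in> \<int> \<Longrightarrow> falling_fact x q \<in> \<int>"
  unfolding falling_fact_def by (intro Ints_prod) auto

text \<open>This is the Vandermonde determinant in the falling-factorial basis.\<close>

definition falling_det :: "nat \<Rightarrow> (nat \<Rightarrow> real) \<Rightarrow> real" where
  "falling_det k x = det (mat k k (\<lambda>(i, j). falling_fact (x i) (k - 1 - j)))"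

lemma falling_det_permutes:
  "falling_det k x =
     (\<Sum>p | p permutes {0..<k}. signof p * (\<Prod>i=0..<k. falling_fact (x i) (k - 1 - p i)))"
proof -
  have "falling_det k x = (\<Sum>p | p permutes {0..<k}.
      signof p * (\<Prod>i=0..<k. mat k k (\<lambda>(i, j). falling_fact (x i) (k - 1 - j)) $$ (i, p i)))"
    unfolding falling_det_def by (rule det_def') simp
  also have "\<dots> = (\<Sum>p | p permutes {0..<k}. signof p * (\<Prod>i=0..<k. falling_fact (x i) (k - 1 - p i)))"
    by (intro sum.cong refl arg_cong[where f="\<lambda>z. _ * z"] prod.cong)
       (auto simp: permutes_in_image)
  finally show ?thesis .
qed

lemma falling_det_cong: "(\<And>i. i < k \<Longrightarrow> x i = y i) \<Longrightarrow> falling_det k x = falling_det k y"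
  unfolding falling_det_def by (intro arg_cong[where f=det] eq_matI) auto

lemma falling_det_eq_0:
  assumes "i < k" "j < k" "i \<noteq> j" "x i = x j"
  shows "falling_det k x = 0"
  unfolding falling_det_def
  by (rule det_identical_rows[of _ k i j]) (use assms in \<open>auto simp: row_def\<close>)

lemma falling_det_Ints: "(\<And>i. i < k \<Longrightarrow> x i \<in> \<int>) \<Longrightarrow> falling_det k x \<in> \<int>"
  unfolding falling_det_permutes by (intro Ints_sum Ints_mult Ints_prod falling_fact_Ints) auto

lemma prod_list_map_upt: "prod_list (map f [0..<n]) = (\<Prod>i<n. f i)"
  by (induction n) auto

lemma falling_det_staircase: "falling_det k (\<lambda>i. real (k - 1 - i)) = (\<Prod>i<k. fact (k - 1 - i))"
proof -
  let ?A = "mat k k (\<lambda>(i, j). falling_fact (real (k - 1 - i)) (k - 1 - j))"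
  have ut: "upper_triangular ?A"
    unfolding upper_triangular_def
  proof (intro allI impI)
    fix i j assume ij: "i < dim_row ?A" "j < i"
    then have "?A $$ (i, j) = falling_fact (real (k - 1 - i)) (k - 1 - j)" by simp
    also have "\<dots> = 0" using ij by (intro falling_fact_of_nat_eq_0) auto
    finally show "?A $$ (i, j) = 0" .
  qed
  have "falling_det k (\<lambda>i. real (k - 1 - i)) = prod_list (diag_mat ?A)"
    unfolding falling_det_def by (rule det_upper_triangular[OF ut, of k]) simp
  also have "\<dots> = (\<Prod>i<k. falling_fact (real (k - 1 - i)) (k - 1 - i))"
    unfolding diag_mat_def by (simp add: prod_list_map_upt)
  also have "\<dots> = (\<Prod>i<k. fact (k - 1 - i))" by (simp only: falling_fact_of_nat_self)
  finally show ?thesis .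
qed

lemma prod_permutes_reversed:
  fixes k :: nat
  assumes "p permutes {0..<k}"
  shows "(\<Prod>i=0..<k. f (k - 1 - p i)) = (\<Prod>m<k. f m)"
proof -
  have "bij_betw (\<lambda>j. k - 1 - j) {0..<k} {..<k}"
    by (rule bij_betw_byWitness[where f'="\<lambda>j. k - 1 - j"]) auto
  then have "bij_betw (\<lambda>i. k - 1 - p i) {0..<k} {..<k}"
    using bij_betw_trans[OF permutes_imp_bij[OF assms]] by (simp add: comp_def)
  then show ?thesis using prod.reindex_bij_betw by blast
qed

text \<open>Row by row, \<open>x (x - 1)\<^sub>q + (T - x) x\<^sub>q = (T - q) x\<^sub>q\<close> for the falling factorial
  \<open>x\<^sub>q\<close>; expanding the product of these identities over the rows gives the sum over \<open>S\<close>.\<close>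

lemma falling_det_recurrence:
  "(\<Sum>S\<in>Pow {..<k}. (\<Prod>i\<in>S. x i) * (\<Prod>i\<in>{..<k} - S. T - x i) *
      falling_det k (\<lambda>i. x i - of_bool (i \<in> S))) = (\<Prod>m<k. T - real m) * falling_det k x"
proof -
  let ?P = "{p. p permutes {0..<k}}" and ?A = "{0..<k}"
  let ?f = "\<lambda>p i. falling_fact (x i) (k - 1 - p i)"
  let ?g = "\<lambda>p i. falling_fact (x i - 1) (k - 1 - p i)"
  have row: "x i * falling_fact (x i - 1) q + (T - x i) * falling_fact (x i) q
      = (T - real q) * falling_fact (x i) q" for i q
    unfolding falling_fact_Suc_left falling_fact_Suc by (simp add: algebra_simps)
  have split: "(\<Prod>i\<in>?A. falling_fact (x i - of_bool (i \<in> S)) (k - 1 - p i))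
      = prod (?g p) S * prod (?f p) (?A - S)" if "S \<subseteq> ?A" for S p
  proof -
    have "(\<Prod>i\<in>?A. falling_fact (x i - of_bool (i \<in> S)) (k - 1 - p i))
        = (\<Prod>i\<in>?A - S. falling_fact (x i - of_bool (i \<in> S)) (k - 1 - p i))
          * (\<Prod>i\<in>S. falling_fact (x i - of_bool (i \<in> S)) (k - 1 - p i))"
      by (rule prod.subset_diff[OF that]) simp
    also have "\<dots> = prod (?f p) (?A - S) * prod (?g p) S"
      by (intro arg_cong2[where f="(*)"] prod.cong) auto
    finally show ?thesis by (simp only: mult.commute)
  qed
  have "(\<Sum>S\<in>Pow ?A. (\<Prod>i\<in>S. x i) * (\<Prod>i\<in>?A - S. T - x i) *
        falling_det k (\<lambda>i. x i - of_bool (i \<in> S)))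
      = (\<Sum>S\<in>Pow ?A. \<Sum>p\<in>?P. signof p * ((\<Prod>i\<in>S. x i) * (\<Prod>i\<in>?A - S. T - x i) *
        (\<Prod>i\<in>?A. falling_fact (x i - of_bool (i \<in> S)) (k - 1 - p i))))"
    unfolding falling_det_permutes sum_distrib_left by (simp add: algebra_simps)
  also have "\<dots> = (\<Sum>p\<in>?P. signof p * (\<Sum>S\<in>Pow ?A.
      (\<Prod>i\<in>S. x i * ?g p i) * (\<Prod>i\<in>?A - S. (T - x i) * ?f p i)))"
    unfolding sum_distrib_left
  proof (subst sum.swap, intro sum.cong refl)
    fix p S assume "S \<in> Pow ?A"
    then have S: "S \<subseteq> ?A" by simp
    show "signof p * ((\<Prod>i\<in>S. x i) * (\<Prod>i\<in>?A - S. T - x i) *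
        (\<Prod>i\<in>?A. falling_fact (x i - of_bool (i \<in> S)) (k - 1 - p i)))
      = signof p * ((\<Prod>i\<in>S. x i * ?g p i) * (\<Prod>i\<in>?A - S. (T - x i) * ?f p i))"
      unfolding split[OF S] prod.distrib by (simp add: algebra_simps)
  qed
  also have "\<dots> = (\<Sum>p\<in>?P. signof p * (\<Prod>i\<in>?A. x i * ?g p i + (T - x i) * ?f p i))"
    by (subst prod_add) auto
  also have "\<dots> = (\<Sum>p\<in>?P. signof p * ((\<Prod>i\<in>?A. T - real (k - 1 - p i)) * prod (?f p) ?A))"
    unfolding row prod.distrib by simp
  also have "\<dots> = (\<Sum>p\<in>?P. (\<Prod>m<k. T - real m) * (signof p * prod (?f p) ?A))"
    by (intro sum.cong refl)
       (simp only: mem_Collect_eq prod_permutes_reversed[where f="\<lambda>m. T - real m"] mult.left_commute)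
  also have "\<dots> = (\<Prod>m<k. T - real m) * falling_det k x"
    unfolding falling_det_permutes sum_distrib_left by simp
  finally show ?thesis by (simp add: atLeast0LessThan)
qed

section \<open>A determinantal lower bound for semistandard tableaux\<close>

text \<open>A shape with at most \<open>k\<close> columns is described by its column lengths
  \<open>c 0, \<dots>, c (k - 1)\<close>, so \<open>c j = conj_part \<lambda> (Suc j)\<close>; it is the shape of a partition iff
  \<open>c\<close> is antitone on \<open>{..<k}\<close>.\<close>

lemma antimono_on_lessThan_iff:
  fixes c :: "nat \<Rightarrow> nat"
  shows "antimono_on {..<k} c \<longleftrightarrow> (\<forall>j. Suc j < k \<longrightarrow> c (Suc j) \<le> c j)"
proof
  assume step: "\<forall>j. Suc j < k \<longrightarrow> c (Suc j) \<le> c j"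
  have "c j \<le> c i" if "i \<le> j" "j < k" for i j
    using that
  proof (induction j)
    case (Suc j)
    show ?case
    proof (cases "i = Suc j")
      case False
      then have "c j \<le> c i" using Suc by simp
      moreover have "c (Suc j) \<le> c j" using Suc.prems step by simp
      ultimately show ?thesis by simp
    qed simp
  qed simp
  then show "antimono_on {..<k} c" by (auto intro: monotone_onI)
qed (auto simp: monotone_on_def)

definition shifted_len :: "nat \<Rightarrow> (nat \<Rightarrow> nat) \<Rightarrow> nat \<Rightarrow> real" where
  "shifted_len k c j = real (c j + (k - 1 - j))"

definition col_weight :: "nat \<Rightarrow> (nat \<Rightarrow> nat) \<Rightarrow> nat \<Rightarrow> real" where
  "col_weight k c t = (\<Prod>j<k. fact (t + j) / (fact (c j + (k - 1 - j)) * fact (t + j - c j)))"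

text \<open>By Weyl's dimension formula \<open>det_count k c t\<close> is the number of semistandard
  tableaux with column lengths \<open>c\<close> and entries at most \<open>t\<close>; only the inequality \<open>\<le>\<close> is proved
  below, by comparing the branching recursions over horizontal strips.\<close>

definition det_count :: "nat \<Rightarrow> (nat \<Rightarrow> nat) \<Rightarrow> nat \<Rightarrow> real" where
  "det_count k c t =
    (if antimono_on {..<k} c \<and> (\<forall>j<k. c j \<le> t)
     then falling_det k (shifted_len k c) * col_weight k c t else 0)"

definition shorten :: "(nat \<Rightarrow> nat) \<Rightarrow> nat set \<Rightarrow> nat \<Rightarrow> nat" where
  "shorten c S j = c j - of_bool (j \<in> S)"

definition strips :: "nat \<Rightarrow> (nat \<Rightarrow> nat) \<Rightarrow> nat set set" where
  "strips k c = {S. S \<subseteq> {..<k} \<and> (\<forall>j\<in>S. 0 < c j)}"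

lemma finite_strips: "finite (strips k c)"
  by (rule finite_subset[of _ "Pow {..<k::nat}"]) (auto simp: strips_def)

lemma shifted_len_shorten:
  "S \<in> strips k c \<Longrightarrow> shifted_len k (shorten c S) = (\<lambda>i. shifted_len k c i - of_bool (i \<in> S))"
  by (rule ext) (auto simp: strips_def shifted_len_def shorten_def of_nat_diff Suc_le_eq)

lemma col_weight_pos: "0 < col_weight k c t"
  unfolding col_weight_def by (intro prod_pos divide_pos_pos mult_pos_pos) auto

lemma fact_quotient_step:
  "real (Suc b) * (fact (Suc a) / (fact (Suc b) * fact m)) / real (Suc a) = (fact a / (fact b * fact m) :: real)"
  unfolding fact_Suc by (simp add: field_simps del: of_nat_Suc)

lemma col_weight_shorten:
  fixes c :: "nat \<Rightarrow> nat"
  assumes S: "S \<in> strips k c" and t: "0 < t" and le: "\<forall>j<k. c j \<le> t"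
    and le': "\<forall>j<k. shorten c S j \<le> t - 1"
  shows "(\<Prod>j<k. (if j \<in> S then shifted_len k c j else real t + real k - 1 - shifted_len k c j)
           * (fact (t + j) / (fact (c j + (k - 1 - j)) * fact (t + j - c j))) / real (t + j))
         = col_weight k (shorten c S) (t - 1)"
  unfolding col_weight_def
proof (intro prod.cong refl)
  fix j assume j: "j \<in> {..<k}"
  show "(if j \<in> S then shifted_len k c j else real t + real k - 1 - shifted_len k c j)
           * (fact (t + j) / (fact (c j + (k - 1 - j)) * fact (t + j - c j))) / real (t + j)
        = fact (t - 1 + j) / (fact (shorten c S j + (k - 1 - j)) * fact (t - 1 + j - shorten c S j))"
  proof (cases "j \<in> S")
    case True
    then have "0 < c j" "c j \<le> t" using S le j by (auto simp: strips_def)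
    then have sh: "shorten c S j = c j - 1"
      and "Suc (c j - 1 + (k - 1 - j)) = c j + (k - 1 - j)" "Suc (t - 1 + j) = t + j"
      and m: "t - 1 + j - (c j - 1) = t + j - c j"
      using True t by (auto simp: shorten_def)
    from fact_quotient_step[of "c j - 1 + (k - 1 - j)" "t - 1 + j" "t + j - c j", unfolded this(2,3)]
    show ?thesis unfolding if_P[OF True] shifted_len_def sh m .
  next
    case False
    then have sh: "shorten c S j = c j" by (simp add: shorten_def)
    have "c j \<le> t - 1" using le' j sh by force
    then have "Suc (t - 1 + j - c j) = t + j - c j" "Suc (t - 1 + j) = t + j"
      and len: "real t + real k - 1 - shifted_len k c j = real (t + j - c j)"
      using j t by (auto simp: shifted_len_def of_nat_diff)
    from fact_quotient_step[of "t - 1 + j - c j" "t - 1 + j" "c j + (k - 1 - j)", unfolded this(1,2)]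
    show ?thesis unfolding if_not_P[OF False] len sh by (simp only: mult.commute)
  qed
qed

lemma strip_term_vanishes:
  fixes c :: "nat \<Rightarrow> nat"
  assumes c: "antimono_on {..<k} c" and S: "S \<subseteq> {..<k}" "S \<notin> strips k c"
  shows "(\<Prod>i\<in>S. shifted_len k c i) * falling_det k (\<lambda>i. shifted_len k c i - of_bool (i \<in> S)) = 0"
proof -
  let ?Z = "{j\<in>S. c j = 0}"
  have "?Z \<subseteq> {..<k}" using S(1) by auto
  then have "finite ?Z" by (rule finite_subset) simp
  have "?Z \<noteq> {}" using S by (auto simp: strips_def)
  define J where "J = Max ?Z"
  have J: "J \<in> S" "c J = 0" "J < k" and Jmax: "\<And>j. j \<in> S \<Longrightarrow> c j = 0 \<Longrightarrow> j \<le> J"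
    using Max_in[OF \<open>finite ?Z\<close> \<open>?Z \<noteq> {}\<close>] Max_ge[OF \<open>finite ?Z\<close>] S unfolding J_def by auto
  show ?thesis
  proof (cases "Suc J < k")
    case False
    then have "shifted_len k c J = 0" using J by (simp add: shifted_len_def)
    then have "(\<Prod>i\<in>S. shifted_len k c i) = 0"
      using J S finite_subset by (intro prod_zero) auto
    then show ?thesis by simp
  next
    case True
    then have "c (Suc J) = 0" using J c by (auto simp: antimono_on_lessThan_iff)
    then have "Suc J \<notin> S" using Jmax[of "Suc J"] by auto
    then have "falling_det k (\<lambda>i. shifted_len k c i - of_bool (i \<in> S)) = 0"
      using J True \<open>c (Suc J) = 0\<close>
      by (intro falling_det_eq_0[where i=J and j="Suc J"]) (auto simp: shifted_len_def of_nat_diff)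
    then show ?thesis by simp
  qed
qed

text \<open>If shortening the columns in \<open>S\<close> breaks monotonicity, two adjacent shifted lengths
  coincide.\<close>

lemma falling_det_shorten_eq_0:
  fixes c :: "nat \<Rightarrow> nat"
  assumes c: "antimono_on {..<k} c" and not_mono: "\<not> antimono_on {..<k} (shorten c S)"
  shows "falling_det k (shifted_len k (shorten c S)) = 0"
proof -
  obtain j where j: "Suc j < k" "shorten c S j < shorten c S (Suc j)"
    using not_mono by (auto simp: antimono_on_lessThan_iff not_le)
  moreover have "c (Suc j) \<le> c j" using c j(1) by (simp add: antimono_on_lessThan_iff)
  ultimately have "shifted_len k (shorten c S) j = shifted_len k (shorten c S) (Suc j)"
    by (auto simp: shifted_len_def shorten_def of_bool_def split: if_splits)
  then show ?thesis using j(1) by (intro falling_det_eq_0[where i=j and j="Suc j"]) auto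
qed

lemma strip_term_eq:
  fixes c :: "nat \<Rightarrow> nat"
  assumes c: "antimono_on {..<k} c" and le: "\<forall>j<k. c j \<le> t" and t: "0 < t"
    and S: "S \<in> strips k c"
  shows "(\<Prod>i\<in>S. shifted_len k c i) * (\<Prod>i\<in>{..<k} - S. real t + real k - 1 - shifted_len k c i)
           * falling_det k (\<lambda>i. shifted_len k c i - of_bool (i \<in> S)) * col_weight k c t
           / (\<Prod>j<k. real (t + j))
         = det_count k (shorten c S) (t - 1)"
    (is "?w * ?v * _ * _ / _ = _")
proof -
  let ?c' = "shorten c S"
  have S': "S \<subseteq> {..<k}" using S by (auto simp: strips_def)
  consider (not_mono) "\<not> antimono_on {..<k} ?c'"
    | (too_long) "antimono_on {..<k} ?c'" "\<not> (\<forall>j<k. ?c' j \<le> t - 1)"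
    | (shape) "antimono_on {..<k} ?c'" "\<forall>j<k. ?c' j \<le> t - 1"
    by blast
  then have "?w * ?v * falling_det k (shifted_len k ?c') * col_weight k c t / (\<Prod>j<k. real (t + j))
      = det_count k ?c' (t - 1)"
  proof cases
    case not_mono
    then show ?thesis using falling_det_shorten_eq_0[OF c] by (simp add: det_count_def)
  next
    case too_long
    then obtain j where j: "j < k" "t - 1 < ?c' j" by (auto simp: not_le)
    have "?c' j \<le> ?c' 0" using j(1) by (intro monotone_onD[OF too_long(1)]) auto
    moreover have "?c' 0 \<le> c 0" "c 0 \<le> t" using le j(1) by (auto simp: shorten_def)
    ultimately have "c 0 = t" "0 \<notin> S" using j(2) t by (auto simp: shorten_def split: if_splits)
    then have "?v = 0"
      using j(1) by (intro prod_zero) (auto simp: shifted_len_def of_nat_diff intro!: bexI[of _ 0])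
    moreover have "det_count k ?c' (t - 1) = 0" using too_long(2) by (auto simp: det_count_def)
    ultimately show ?thesis by (simp only: mult_zero_left mult_zero_right div_0)
  next
    case shape
    have "?w * ?v = (\<Prod>j<k. if j \<in> S then shifted_len k c j else real t + real k - 1 - shifted_len k c j)"
      using S' by (simp add: prod.If_cases Int_absorb1 Diff_eq)
    then have "?w * ?v * col_weight k c t / (\<Prod>j<k. real (t + j)) = col_weight k ?c' (t - 1)"
      using col_weight_shorten[OF S t le shape(2)]
      by (simp only: col_weight_def prod.distrib prod_dividef times_divide_eq_right)
    moreover have "?w * ?v * falling_det k (shifted_len k ?c') * col_weight k c t / (\<Prod>j<k. real (t + j))
        = falling_det k (shifted_len k ?c') * (?w * ?v * col_weight k c t / (\<Prod>j<k. real (t + j)))"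
      by (simp only: mult_ac times_divide_eq_right)
    ultimately show ?thesis using shape by (simp add: det_count_def)
  qed
  then show ?thesis by (simp only: shifted_len_shorten[OF S])
qed

lemma det_count_recurrence:
  fixes c :: "nat \<Rightarrow> nat"
  assumes c: "antimono_on {..<k} c" and le: "\<forall>j<k. c j \<le> t" and t: "0 < t"
  shows "det_count k c t = (\<Sum>S\<in>strips k c. det_count k (shorten c S) (t - 1))"
proof -
  let ?T = "real t + real k - 1"
  define P where "P = (\<Prod>j<k. real (t + j))"
  define w where "w S = (\<Prod>i\<in>S. shifted_len k c i) * (\<Prod>i\<in>{..<k} - S. ?T - shifted_len k c i)" for S
  define y where "y S = (\<lambda>i. shifted_len k c i - of_bool (i \<in> S))" for S
  have "(\<Prod>m<k. ?T - real m) = (\<Prod>m<k. real (t + (k - Suc m)))"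
    by (intro prod.cong refl) (auto simp: of_nat_diff)
  also have "\<dots> = P" unfolding P_def by (rule prod.nat_diff_reindex)
  finally have "(\<Sum>S\<in>Pow {..<k}. w S * falling_det k (y S)) = P * falling_det k (shifted_len k c)"
    using falling_det_recurrence[where x="shifted_len k c" and T="?T"] by (simp add: w_def y_def)
  moreover have "P > 0" unfolding P_def using t by (intro prod_pos) auto
  ultimately have "det_count k c t = (\<Sum>S\<in>Pow {..<k}. w S * falling_det k (y S)) * col_weight k c t / P"
    using c le by (simp add: det_count_def field_simps)
  also have "(\<Sum>S\<in>Pow {..<k}. w S * falling_det k (y S)) = (\<Sum>S\<in>strips k c. w S * falling_det k (y S))"
  proof (rule sum.mono_neutral_right)
    show "\<forall>S\<in>Pow {..<k} - strips k c. w S * falling_det k (y S) = 0"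
      using strip_term_vanishes[OF c] by (auto simp: w_def y_def)
  qed (auto simp: strips_def)
  also have "\<dots> * col_weight k c t / P = (\<Sum>S\<in>strips k c. det_count k (shorten c S) (t - 1))"
    unfolding sum_distrib_right sum_divide_distrib
    by (intro sum.cong refl) (unfold w_def y_def P_def, rule strip_term_eq[OF c le t])
  finally show ?thesis .
qed

lemma det_count_pos:
  fixes c :: "nat \<Rightarrow> nat"
  shows "antimono_on {..<k} c \<Longrightarrow> \<forall>j<k. c j \<le> t \<Longrightarrow> 0 < det_count k c t"
proof (induction t arbitrary: c)
  case 0
  then have "falling_det k (shifted_len k c) = falling_det k (\<lambda>i. real (k - 1 - i))"
    by (intro falling_det_cong) (simp add: shifted_len_def)
  also have "\<dots> > 0" unfolding falling_det_staircase by (intro prod_pos) auto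
  finally show ?case using 0 col_weight_pos by (simp add: det_count_def)
next
  case (Suc t)
  let ?S = "{j\<in>{..<k}. 0 < c j}"
  have S: "?S \<in> strips k c" by (auto simp: strips_def)
  have "antimono_on {..<k} (shorten c ?S)" "\<forall>j<k. shorten c ?S j \<le> t"
    using Suc.prems by (auto simp: antimono_on_lessThan_iff shorten_def)
  then have "0 < det_count k (shorten c ?S) t" by (rule Suc.IH)
  moreover have "0 \<le> det_count k (shorten c S) t" for S
    using Suc.IH[of "shorten c S"] by (cases "antimono_on {..<k} (shorten c S) \<and> (\<forall>j<k. shorten c S j \<le> t)")
      (auto simp: det_count_def)
  ultimately have "0 < (\<Sum>S\<in>strips k c. det_count k (shorten c S) t)"
    by (intro sum_pos2[OF finite_strips S]) auto
  then show ?case using det_count_recurrence[OF Suc.prems] by simp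
qed

lemma falling_det_shifted_ge_1:
  fixes c :: "nat \<Rightarrow> nat"
  assumes "antimono_on {..<k} c"
  shows "1 \<le> falling_det k (shifted_len k c)"
proof -
  have "0 < det_count k c (c 0)"
    by (intro det_count_pos assms allI impI monotone_onD[OF assms]) auto
  then have "0 < falling_det k (shifted_len k c)"
    using col_weight_pos[of k c "c 0"] by (auto simp: det_count_def zero_less_mult_iff split: if_splits)
  moreover have "falling_det k (shifted_len k c) \<in> \<int>"
    by (rule falling_det_Ints) (simp add: shifted_len_def)
  ultimately show ?thesis by (auto elim!: Ints_cases)
qed

section \<open>Tableaux on arbitrary cell sets\<close>

definition col_diagram :: "nat \<Rightarrow> (nat \<Rightarrow> nat) \<Rightarrow> (nat \<times> nat) set" where
  "col_diagram k c = {(i, j). j < k \<and> i < c j}"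

definition ssyt_on :: "(nat \<times> nat) set \<Rightarrow> nat \<Rightarrow> (nat \<times> nat \<Rightarrow> nat) set" where
  "ssyt_on D t = {T. (\<forall>x. x \<notin> D \<longrightarrow> T x = 0)
     \<and> (\<forall>x\<in>D. T x \<in> {1..t})
     \<and> (\<forall>i j. (i, Suc j) \<in> D \<longrightarrow> T (i, j) \<le> T (i, Suc j))
     \<and> (\<forall>i j. (Suc i, j) \<in> D \<longrightarrow> T (i, j) < T (Suc i, j))}"

definition syt_on :: "(nat \<times> nat) set \<Rightarrow> nat \<Rightarrow> (nat \<times> nat \<Rightarrow> nat) set" where
  "syt_on D n = {T. (\<forall>x. x \<notin> D \<longrightarrow> T x = 0)
     \<and> bij_betw T D {1..n}
     \<and> (\<forall>i j. (i, Suc j) \<in> D \<longrightarrow> T (i, j) < T (i, Suc j))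
     \<and> (\<forall>i j. (Suc i, j) \<in> D \<longrightarrow> T (i, j) < T (Suc i, j))}"

lemma ssyt_eq_ssyt_on: "ssyt lam t = ssyt_on (diagram lam) t"
  unfolding ssyt_def ssyt_on_def ..

lemma syt_eq_syt_on: "syt lam = syt_on (diagram lam) (sum_list lam)"
  unfolding syt_def syt_on_def ..

lemma ssyt_on_outside: "T \<in> ssyt_on D t \<Longrightarrow> x \<notin> D \<Longrightarrow> T x = 0"
  unfolding ssyt_on_def by blast

lemma ssyt_on_range: "T \<in> ssyt_on D t \<Longrightarrow> x \<in> D \<Longrightarrow> T x \<in> {1..t}"
  unfolding ssyt_on_def by blast

lemma ssyt_on_row: "T \<in> ssyt_on D t \<Longrightarrow> (i, Suc j) \<in> D \<Longrightarrow> T (i, j) \<le> T (i, Suc j)"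
  unfolding ssyt_on_def by blast

lemma ssyt_on_col: "T \<in> ssyt_on D t \<Longrightarrow> (Suc i, j) \<in> D \<Longrightarrow> T (i, j) < T (Suc i, j)"
  unfolding ssyt_on_def by blast

lemma syt_on_outside: "T \<in> syt_on D n \<Longrightarrow> x \<notin> D \<Longrightarrow> T x = 0"
  unfolding syt_on_def by blast

lemma syt_on_bij: "T \<in> syt_on D n \<Longrightarrow> bij_betw T D {1..n}"
  unfolding syt_on_def by blast

lemma syt_on_col: "T \<in> syt_on D n \<Longrightarrow> (Suc i, j) \<in> D \<Longrightarrow> T (i, j) < T (Suc i, j)"
  unfolding syt_on_def by blast

lemma finite_supported_funs:
  assumes "finite D" "finite B"
  shows "finite {T :: 'a \<Rightarrow> nat. (\<forall>x. x \<notin> D \<longrightarrow> T x = 0) \<and> (\<forall>x\<in>D. T x \<in> B)}"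
proof -
  have "{T :: 'a \<Rightarrow> nat. (\<forall>x. x \<notin> D \<longrightarrow> T x = 0) \<and> (\<forall>x\<in>D. T x \<in> B)}
      \<subseteq> (\<lambda>g x. if x \<in> D then g x else 0) ` (D \<rightarrow>\<^sub>E B)"
  proof
    fix T assume T: "T \<in> {T :: 'a \<Rightarrow> nat. (\<forall>x. x \<notin> D \<longrightarrow> T x = 0) \<and> (\<forall>x\<in>D. T x \<in> B)}"
    then have "T = (\<lambda>x. if x \<in> D then restrict T D x else 0)" by auto
    moreover have "restrict T D \<in> D \<rightarrow>\<^sub>E B" using T by auto
    ultimately show "T \<in> (\<lambda>g x. if x \<in> D then g x else 0) ` (D \<rightarrow>\<^sub>E B)" by blast
  qed
  moreover have "finite (D \<rightarrow>\<^sub>E B)" using assms by (intro finite_PiE) auto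
  ultimately show ?thesis using finite_subset by blast
qed

lemma finite_ssyt_on: "finite D \<Longrightarrow> finite (ssyt_on D t)"
  by (rule finite_subset[OF _ finite_supported_funs[of D "{1..t}"]]) (auto simp: ssyt_on_def)

lemma finite_syt_on: "finite D \<Longrightarrow> finite (syt_on D n)"
  by (rule finite_subset[OF _ finite_supported_funs[of D "{1..n}"]])
     (auto simp: syt_on_def bij_betw_def)

lemma col_diagram_swap: "col_diagram k c = (\<lambda>(j, i). (i, j)) ` Sigma {..<k} (\<lambda>j. {..<c j})"
  unfolding col_diagram_def by auto

lemma inj_on_swap: "inj_on (\<lambda>(j :: nat, i :: nat). (i, j)) A"
  by (auto simp: inj_on_def)

lemma finite_col_diagram: "finite (col_diagram k c)"
  unfolding col_diagram_swap by simp

lemma card_col_diagram: "card (col_diagram k c) = (\<Sum>j<k. c j)"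
  unfolding col_diagram_swap by (simp add: card_image[OF inj_on_swap] card_SigmaI)

lemma prod_col_diagram: "(\<Prod>u\<in>col_diagram k c. g (snd u)) = (\<Prod>j<k. (g j :: real) ^ c j)"
proof -
  have "(\<Prod>u\<in>col_diagram k c. g (snd u)) = (\<Prod>(j, i)\<in>Sigma {..<k} (\<lambda>j. {..<c j}). g j)"
    unfolding col_diagram_swap by (subst prod.reindex[OF inj_on_swap]) (simp add: case_prod_beta comp_def)
  also have "\<dots> = (\<Prod>j<k. g j ^ c j)" by (subst prod.Sigma[symmetric]) auto
  finally show ?thesis .
qed

lemma col_diagram_snd: "u \<in> col_diagram k c \<Longrightarrow> snd u < k"
  unfolding col_diagram_def by auto

lemma col_diagram_Suc_col:
  "antimono_on {..<k} c \<Longrightarrow> (i, Suc j) \<in> col_diagram k c \<Longrightarrow> (i, j) \<in> col_diagram k c"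
  unfolding col_diagram_def by (auto simp: antimono_on_lessThan_iff intro: less_le_trans)

section \<open>Semistandard tableaux dominate the determinantal count\<close>

text \<open>Removing the entries \<open>t\<close> from a semistandard tableau removes a horizontal strip, the
  bottom cells of the columns in some \<open>S \<in> strips k c\<close>; conversely \<open>add_strip\<close> refills them.\<close>

definition add_strip ::
  "(nat \<Rightarrow> nat) \<Rightarrow> nat set \<Rightarrow> nat \<Rightarrow> (nat \<times> nat \<Rightarrow> nat) \<Rightarrow> nat \<times> nat \<Rightarrow> nat" where
  "add_strip c S t T = (\<lambda>(i, j). if j \<in> S \<and> i = c j - 1 then t else T (i, j))"

lemma col_diagram_shorten:
  "S \<in> strips k c \<Longrightarrow>
    (i, j) \<in> col_diagram k (shorten c S) \<longleftrightarrow> (i, j) \<in> col_diagram k c \<and> \<not> (j \<in> S \<and> i = c j - 1)"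
  unfolding strips_def col_diagram_def shorten_def by auto

lemma strip_cell_in_col_diagram: "S \<in> strips k c \<Longrightarrow> j \<in> S \<Longrightarrow> (c j - 1, j) \<in> col_diagram k c"
  unfolding strips_def col_diagram_def by auto

lemma add_strip_ssyt_on:
  fixes c :: "nat \<Rightarrow> nat"
  assumes c: "antimono_on {..<k} c" and S: "S \<in> strips k c"
    and c': "antimono_on {..<k} (shorten c S)" and t: "0 < t"
    and T: "T \<in> ssyt_on (col_diagram k (shorten c S)) (t - 1)"
  shows "add_strip c S t T \<in> ssyt_on (col_diagram k c) t"
proof -
  let ?D = "col_diagram k c" and ?D' = "col_diagram k (shorten c S)" and ?E = "add_strip c S t T"
  have new: "?E (i, j) = t" if "j \<in> S \<and> i = c j - 1" for i j
    using that by (simp add: add_strip_def)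
  have old: "?E (i, j) = T (i, j)" if "\<not> (j \<in> S \<and> i = c j - 1)" for i j
    using that by (auto simp: add_strip_def)
  note D' = col_diagram_shorten[OF S]
  have T_range: "T x \<in> {1..t - 1}" if "x \<in> ?D'" for x
    using ssyt_on_range[OF T that] .
  have outside: "?E (i, j) = 0" if "(i, j) \<notin> ?D" for i j
    using that strip_cell_in_col_diagram[OF S] old D' ssyt_on_outside[OF T] by metis
  have range: "?E (i, j) \<in> {1..t}" if "(i, j) \<in> ?D" for i j
    using that new old D' T_range t by (cases "j \<in> S \<and> i = c j - 1") force+
  have row: "?E (i, j) \<le> ?E (i, Suc j)" if ij: "(i, Suc j) \<in> ?D" for i j
  proof (cases "Suc j \<in> S \<and> i = c (Suc j) - 1")
    case True
    then show ?thesis using new range col_diagram_Suc_col[OF c ij] by auto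
  next
    case False
    then have ij': "(i, Suc j) \<in> ?D'" using D' ij by simp
    have "\<not> (j \<in> S \<and> i = c j - 1)"
    proof
      assume "j \<in> S \<and> i = c j - 1"
      then have "shorten c S j = i" by (simp add: shorten_def)
      moreover have "shorten c S (Suc j) \<le> shorten c S j" "i < shorten c S (Suc j)"
        using c' ij' by (auto simp: antimono_on_lessThan_iff col_diagram_def)
      ultimately show False by simp
    qed
    then show ?thesis using old False ssyt_on_row[OF T ij'] by simp
  qed
  have col: "?E (i, j) < ?E (Suc i, j)" if ij: "(Suc i, j) \<in> ?D" for i j
  proof -
    have not_new: "\<not> (j \<in> S \<and> i = c j - 1)" using ij by (auto simp: col_diagram_def)
    then have ij': "(i, j) \<in> ?D'" using D' ij by (auto simp: col_diagram_def)
    show ?thesis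
    proof (cases "j \<in> S \<and> Suc i = c j - 1")
      case True
      then show ?thesis using new old[OF not_new] T_range[OF ij'] t by auto
    next
      case False
      then have "(Suc i, j) \<in> ?D'" using D' ij by simp
      then show ?thesis using old[OF False] old[OF not_new] ssyt_on_col[OF T] by simp
    qed
  qed
  show ?thesis unfolding ssyt_on_def using outside range row col by auto
qed

lemma inj_on_add_strip:
  assumes S: "S \<in> strips k c"
  shows "inj_on (add_strip c S t) (ssyt_on (col_diagram k (shorten c S)) t')"
proof (rule inj_onI)
  fix T T' assume T: "T \<in> ssyt_on (col_diagram k (shorten c S)) t'"
    and T': "T' \<in> ssyt_on (col_diagram k (shorten c S)) t'" and eq: "add_strip c S t T = add_strip c S t T'"
  show "T = T'"
  proof
    fix x :: "nat \<times> nat"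
    obtain i j where x: "x = (i, j)" by (cases x)
    show "T x = T' x"
    proof (cases "j \<in> S \<and> i = c j - 1")
      case True
      then have "x \<notin> col_diagram k (shorten c S)" using col_diagram_shorten[OF S] x by auto
      then show ?thesis using ssyt_on_outside[OF T] ssyt_on_outside[OF T'] by simp
    next
      case False
      then show ?thesis using fun_cong[OF eq, of x] x by (auto simp: add_strip_def)
    qed
  qed
qed

lemma add_strip_neq:
  assumes S1: "S1 \<in> strips k c" and S2: "S2 \<in> strips k c" and j: "j \<in> S1" "j \<notin> S2" and t: "0 < t"
    and T2: "T2 \<in> ssyt_on (col_diagram k (shorten c S2)) (t - 1)"
  shows "add_strip c S1 t T1 \<noteq> add_strip c S2 t T2"
proof -
  let ?x = "(c j - 1, j)"
  have "?x \<in> col_diagram k (shorten c S2)"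
    using col_diagram_shorten[OF S2] strip_cell_in_col_diagram[OF S1 j(1)] j(2) by auto
  then have "T2 ?x < t" using ssyt_on_range[OF T2] t by force
  moreover have "add_strip c S1 t T1 ?x = t" "add_strip c S2 t T2 ?x = T2 ?x"
    using j by (auto simp: add_strip_def)
  ultimately show ?thesis by force
qed

lemma card_ssyt_on_ge_sum_strips:
  fixes c :: "nat \<Rightarrow> nat"
  assumes c: "antimono_on {..<k} c" and t: "0 < t"
  shows "(\<Sum>S | S \<in> strips k c \<and> antimono_on {..<k} (shorten c S).
            card (ssyt_on (col_diagram k (shorten c S)) (t - 1)))
         \<le> card (ssyt_on (col_diagram k c) t)"
proof -
  let ?V = "{S. S \<in> strips k c \<and> antimono_on {..<k} (shorten c S)}"
  let ?A = "\<lambda>S. add_strip c S t ` ssyt_on (col_diagram k (shorten c S)) (t - 1)"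
  have "finite ?V" using finite_strips by (rule finite_subset[rotated]) auto
  have "(\<Sum>S\<in>?V. card (ssyt_on (col_diagram k (shorten c S)) (t - 1))) = (\<Sum>S\<in>?V. card (?A S))"
    by (intro sum.cong refl card_image[symmetric] inj_on_add_strip) auto
  also have "\<dots> = card (\<Union>S\<in>?V. ?A S)"
  proof (rule card_UN_disjoint[symmetric])
    show "\<forall>S\<in>?V. finite (?A S)" using finite_ssyt_on[OF finite_col_diagram] by blast
    show "\<forall>S\<in>?V. \<forall>S'\<in>?V. S \<noteq> S' \<longrightarrow> ?A S \<inter> ?A S' = {}"
    proof (intro ballI impI equals0I)
      fix S S' y assume S: "S \<in> ?V" and S': "S' \<in> ?V" and "S \<noteq> S'" and "y \<in> ?A S \<inter> ?A S'"
      then obtain T T' where T: "T \<in> ssyt_on (col_diagram k (shorten c S)) (t - 1)"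
        and T': "T' \<in> ssyt_on (col_diagram k (shorten c S')) (t - 1)"
        and eq: "add_strip c S t T = add_strip c S' t T'" by auto
      from \<open>S \<noteq> S'\<close> obtain j where "j \<in> S \<and> j \<notin> S' \<or> j \<in> S' \<and> j \<notin> S" by blast
      then show False
        using add_strip_neq[of S k c S' j t T' T] add_strip_neq[of S' k c S j t T T'] S S' T T' eq t
        by auto
    qed
  qed fact
  also have "\<dots> \<le> card (ssyt_on (col_diagram k c) t)"
    by (intro card_mono finite_ssyt_on finite_col_diagram) (use add_strip_ssyt_on c t in auto)
  finally show ?thesis .
qed

lemma det_count_empty: "(\<forall>j<k. c j = 0) \<Longrightarrow> det_count k c 0 = 1"
proof -
  assume c0: "\<forall>j<k. c j = 0"
  have "falling_det k (shifted_len k c) = (\<Prod>i<k. fact (k - 1 - i))"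
    using c0 falling_det_staircase by (simp add: shifted_len_def cong: falling_det_cong)
  moreover have "col_weight k c 0 = (\<Prod>j<k. 1 / fact (k - 1 - j))"
    unfolding col_weight_def by (intro prod.cong refl) (simp add: c0)
  moreover have "antimono_on {..<k} c" using c0 by (simp add: antimono_on_lessThan_iff)
  ultimately show ?thesis using c0 by (simp add: det_count_def flip: prod.distrib)
qed

lemma det_count_le_card_ssyt_on:
  fixes c :: "nat \<Rightarrow> nat"
  shows "antimono_on {..<k} c \<Longrightarrow> det_count k c t \<le> card (ssyt_on (col_diagram k c) t)"
proof (induction t arbitrary: c)
  case 0
  show ?case
  proof (cases "\<forall>j<k. c j = 0")
    case True
    then have "col_diagram k c = {}" by (auto simp: col_diagram_def)
    moreover have "ssyt_on {} 0 = {\<lambda>_. 0}" by (auto simp: ssyt_on_def)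
    ultimately show ?thesis using det_count_empty[OF True] by simp
  qed (auto simp: det_count_def)
next
  case (Suc t)
  let ?V = "{S. S \<in> strips k c \<and> antimono_on {..<k} (shorten c S)}"
  show ?case
  proof (cases "\<forall>j<k. c j \<le> Suc t")
    case True
    have "det_count k c (Suc t) = (\<Sum>S\<in>strips k c. det_count k (shorten c S) t)"
      using det_count_recurrence[OF Suc.prems True] by simp
    also have "\<dots> = (\<Sum>S\<in>?V. det_count k (shorten c S) t)"
      by (rule sum.mono_neutral_right[OF finite_strips]) (auto simp: det_count_def)
    also have "\<dots> \<le> (\<Sum>S\<in>?V. real (card (ssyt_on (col_diagram k (shorten c S)) t)))"
      by (intro sum_mono Suc.IH) simp
    also have "\<dots> \<le> card (ssyt_on (col_diagram k c) (Suc t))"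
      using card_ssyt_on_ge_sum_strips[OF Suc.prems, of "Suc t"] by (simp flip: of_nat_sum)
    finally show ?thesis .
  qed (auto simp: det_count_def)
qed

lemma col_weight_le_card_ssyt_on:
  fixes c :: "nat \<Rightarrow> nat"
  assumes "antimono_on {..<k} c" "\<forall>j<k. c j \<le> t"
  shows "col_weight k c t \<le> card (ssyt_on (col_diagram k c) t)"
proof -
  have "col_weight k c t \<le> falling_det k (shifted_len k c) * col_weight k c t"
    using falling_det_shifted_ge_1[OF assms(1)] col_weight_pos[of k c t] by simp
  also have "\<dots> = det_count k c t" using assms by (simp add: det_count_def)
  also have "\<dots> \<le> card (ssyt_on (col_diagram k c) t)" by (rule det_count_le_card_ssyt_on[OF assms(1)])
  finally show ?thesis .
qed

section \<open>Upper bounds\<close>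

definition rank_in :: "'a set \<Rightarrow> ('a \<Rightarrow> nat) \<Rightarrow> 'a \<Rightarrow> nat" where
  "rank_in D f u = card {v\<in>D. f v \<le> f u}"

lemma rank_in_less:
  assumes "finite D" "u \<in> D" "v \<in> D" "f u < f v"
  shows "rank_in D f u < rank_in D f v"
proof -
  have "v \<in> {w\<in>D. f w \<le> f v}" "v \<notin> {w\<in>D. f w \<le> f u}" using assms by auto
  moreover have "{w\<in>D. f w \<le> f u} \<subseteq> {w\<in>D. f w \<le> f v}" using assms by auto
  ultimately have "{w\<in>D. f w \<le> f u} \<subset> {w\<in>D. f w \<le> f v}" by blast
  then show ?thesis unfolding rank_in_def using assms(1) by (intro psubset_card_mono) auto
qed

lemma rank_in_less_iff:
  assumes "finite D" "inj_on f D" "u \<in> D" "v \<in> D"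
  shows "rank_in D f u < rank_in D f v \<longleftrightarrow> f u < f v"
proof
  assume less: "rank_in D f u < rank_in D f v"
  show "f u < f v"
  proof (rule ccontr)
    assume "\<not> f u < f v"
    moreover have "f u = f v \<Longrightarrow> u = v" using inj_onD[OF assms(2) _ assms(3,4)] .
    ultimately have "f v < f u \<or> u = v" by linarith
    then show False using rank_in_less[OF assms(1,4,3), of f] less by auto
  qed
qed (rule rank_in_less[OF assms(1,3,4)])

lemma bij_betw_rank_in:
  assumes "finite D" "inj_on f D"
  shows "bij_betw (rank_in D f) D {1..card D}"
proof -
  have inj: "inj_on (rank_in D f) D"
  proof (rule inj_onI, rule ccontr)
    fix u v assume uv: "u \<in> D" "v \<in> D" "rank_in D f u = rank_in D f v" "u \<noteq> v"
    then have "f u \<noteq> f v" using inj_onD[OF assms(2) _ uv(1,2)] by blast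
    then have "f u < f v \<or> f v < f u" by linarith
    then show False using rank_in_less[OF assms(1) uv(1,2), of f] rank_in_less[OF assms(1) uv(2,1), of f] uv(3)
      by auto
  qed
  have "rank_in D f ` D \<subseteq> {1..card D}"
  proof
    fix x assume "x \<in> rank_in D f ` D"
    then obtain u where u: "u \<in> D" "x = rank_in D f u" by auto
    then have "{v\<in>D. f v \<le> f u} \<noteq> {}" by auto
    then have "1 \<le> x" unfolding u rank_in_def using assms(1) by (simp add: Suc_le_eq card_gt_0_iff)
    moreover have "x \<le> card D" unfolding u rank_in_def using assms(1) by (intro card_mono) auto
    ultimately show "x \<in> {1..card D}" by simp
  qed
  moreover have "card (rank_in D f ` D) = card {1..card D}" using card_image[OF inj] by simp
  ultimately have "rank_in D f ` D = {1..card D}" by (intro card_subset_eq) auto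
  with inj show ?thesis unfolding bij_betw_def by simp
qed

text \<open>A strictly increasing map on a finite set is determined by its image: both send
  \<open>i\<close> to the element of the image of rank \<open>card {i' \<in> I. i' \<le> i}\<close>.\<close>

lemma strict_mono_on_eq_if_image_eq:
  fixes f g :: "nat \<Rightarrow> nat"
  assumes "finite I" "strict_mono_on I f" "strict_mono_on I g" "f ` I = g ` I" "i \<in> I"
  shows "f i = g i"
proof -
  have rank: "rank_in (h ` I) id (h i) = card {i'\<in>I. i' \<le> i}" if "strict_mono_on I h" for h :: "nat \<Rightarrow> nat"
  proof -
    have "{a\<in>h ` I. a \<le> h i} = h ` {i'\<in>I. i' \<le> i}"
      using strict_mono_on_less_eq[OF that _ assms(5)] by auto
    moreover have "inj_on h {i'\<in>I. i' \<le> i}"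
      using strict_mono_on_imp_inj_on[OF that] by (rule inj_on_subset) auto
    ultimately show ?thesis by (simp add: rank_in_def card_image)
  qed
  have "inj_on (rank_in (f ` I) id) (f ` I)"
    using bij_betw_rank_in[of "f ` I" id] assms(1) by (simp add: bij_betw_def)
  moreover have "rank_in (f ` I) id (f i) = rank_in (f ` I) id (g i)"
    using rank[OF assms(2)] rank[OF assms(3)] assms(4) by simp
  moreover have "f i \<in> f ` I" "g i \<in> f ` I" using assms(4,5) by auto
  ultimately show ?thesis by (rule inj_onD)
qed

lemma strict_mono_on_column:
  fixes T :: "nat \<times> nat \<Rightarrow> nat"
  assumes col: "\<And>i. (Suc i, j) \<in> col_diagram k c \<Longrightarrow> T (i, j) < T (Suc i, j)" and j: "j < k"
  shows "strict_mono_on {..<c j} (\<lambda>i. T (i, j))"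
proof (rule strict_mono_onI)
  fix i i' :: nat assume "i \<in> {..<c j}" "i' \<in> {..<c j}" "i < i'"
  then show "T (i, j) < T (i', j)"
  proof (induction i')
    case (Suc i')
    have "T (i', j) < T (Suc i', j)" using col Suc.prems j by (auto simp: col_diagram_def)
    moreover have "T (i, j) < T (i', j)" if "i \<noteq> i'" using Suc.IH Suc.prems that by simp
    ultimately show ?case by (cases "i = i'") auto
  qed simp
qed

lemma card_ssyt_on_le_prod_choose:
  "card (ssyt_on (col_diagram k c) n) \<le> (\<Prod>j<k. n choose c j)"
proof -
  let ?D = "col_diagram k c"
  let ?cols = "\<lambda>P. (\<lambda>j\<in>{..<k}. (\<lambda>i. P (i, j)) ` {..<c j})"
  let ?B = "PiE {..<k} (\<lambda>j. {A. A \<subseteq> {1..n} \<and> card A = c j})"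
  have mono: "strict_mono_on {..<c j} (\<lambda>i. P (i, j))" if "P \<in> ssyt_on ?D n" "j < k" for P j
    using that by (intro strict_mono_on_column ssyt_on_col) auto
  have "inj_on ?cols (ssyt_on ?D n)"
  proof (rule inj_onI, rule ext)
    fix P P' and u :: "nat \<times> nat"
    assume P: "P \<in> ssyt_on ?D n" and P': "P' \<in> ssyt_on ?D n" and eq: "?cols P = ?cols P'"
    obtain i j where u: "u = (i, j)" by (cases u)
    show "P u = P' u"
    proof (cases "u \<in> ?D")
      case True
      then have "j < k" "i < c j" using u by (auto simp: col_diagram_def)
      moreover have "(\<lambda>i. P (i, j)) ` {..<c j} = (\<lambda>i. P' (i, j)) ` {..<c j}"
        using fun_cong[OF eq, of j] \<open>j < k\<close> by simp
      ultimately show ?thesis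
        using strict_mono_on_eq_if_image_eq[OF _ mono[OF P] mono[OF P']] u by auto
    qed (use ssyt_on_outside[OF P] ssyt_on_outside[OF P'] in simp)
  qed
  moreover have "?cols ` ssyt_on ?D n \<subseteq> ?B"
  proof (rule image_subsetI, rule PiE_I)
    fix P j assume P: "P \<in> ssyt_on ?D n" and j: "j \<in> {..<k}"
    have "(\<lambda>i. P (i, j)) ` {..<c j} \<subseteq> {1..n}"
      using ssyt_on_range[OF P] j by (auto simp: col_diagram_def)
    moreover have "card ((\<lambda>i. P (i, j)) ` {..<c j}) = c j"
      using strict_mono_on_imp_inj_on[OF mono[OF P]] j by (simp add: card_image)
    ultimately show "?cols P j \<in> {A. A \<subseteq> {1..n} \<and> card A = c j}" using j by simp
  qed simp
  moreover have "finite ?B" by (simp add: finite_PiE)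
  ultimately have "card (ssyt_on ?D n) \<le> card ?B" by (rule card_inj_on_le)
  also have "\<dots> = (\<Prod>j<k. n choose c j)" by (simp add: card_PiE n_subsets)
  finally show ?thesis .
qed

text \<open>A standard tableau is determined by its column word, which records the column of
  each entry \<open>1, \<dots>, N\<close>; summing the weights \<open>\<Prod>m. p (w m)\<close> of all words gives \<open>1\<close>.\<close>

definition col_word :: "(nat \<times> nat) set \<Rightarrow> nat \<Rightarrow> (nat \<times> nat \<Rightarrow> nat) \<Rightarrow> nat \<Rightarrow> nat" where
  "col_word D N Q = (\<lambda>m\<in>{1..N}. snd (inv_into D Q m))"

lemma col_word_column:
  assumes Q: "Q \<in> syt_on (col_diagram k c) N" and j: "j < k"
  shows "(\<lambda>i. Q (i, j)) ` {..<c j} = {m\<in>{1..N}. col_word (col_diagram k c) N Q m = j}"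
proof -
  have b: "bij_betw Q (col_diagram k c) {1..N}" by (rule syt_on_bij[OF Q])
  show ?thesis
  proof (intro equalityI subsetI)
    fix m assume "m \<in> (\<lambda>i. Q (i, j)) ` {..<c j}"
    then obtain i where "(i, j) \<in> col_diagram k c" "m = Q (i, j)" using j by (auto simp: col_diagram_def)
    then show "m \<in> {m\<in>{1..N}. col_word (col_diagram k c) N Q m = j}"
      using b by (auto simp: col_word_def bij_betw_def inv_into_f_f)
  next
    fix m assume "m \<in> {m\<in>{1..N}. col_word (col_diagram k c) N Q m = j}"
    then have m: "m \<in> {1..N}" and w: "snd (inv_into (col_diagram k c) Q m) = j"
      by (auto simp: col_word_def)
    let ?u = "inv_into (col_diagram k c) Q m"
    have "?u \<in> col_diagram k c" using bij_betwE[OF bij_betw_inv_into[OF b]] m by blast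
    moreover have "Q ?u = m" by (rule bij_betw_inv_into_right[OF b m])
    ultimately show "m \<in> (\<lambda>i. Q (i, j)) ` {..<c j}" using w by (cases ?u) (force simp: col_diagram_def)
  qed
qed

lemma inj_on_col_word: "inj_on (col_word (col_diagram k c) N) (syt_on (col_diagram k c) N)"
proof (rule inj_onI, rule ext)
  fix Q Q' and u :: "nat \<times> nat"
  assume Q: "Q \<in> syt_on (col_diagram k c) N" and Q': "Q' \<in> syt_on (col_diagram k c) N"
    and eq: "col_word (col_diagram k c) N Q = col_word (col_diagram k c) N Q'"
  obtain i j where u: "u = (i, j)" by (cases u)
  have mono: "strict_mono_on {..<c j} (\<lambda>i. R (i, j))" if "R \<in> syt_on (col_diagram k c) N" "j < k" for R
    using that by (intro strict_mono_on_column syt_on_col) auto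
  show "Q u = Q' u"
  proof (cases "u \<in> col_diagram k c")
    case True
    then have j: "j < k" and "i < c j" using u by (auto simp: col_diagram_def)
    moreover have "(\<lambda>i. Q (i, j)) ` {..<c j} = (\<lambda>i. Q' (i, j)) ` {..<c j}"
      unfolding col_word_column[OF Q j] col_word_column[OF Q' j] eq ..
    ultimately show ?thesis using strict_mono_on_eq_if_image_eq[OF _ mono[OF Q j] mono[OF Q' j]] u by auto
  qed (use syt_on_outside[OF Q] syt_on_outside[OF Q'] in simp)
qed

lemma prod_col_word:
  assumes Q: "Q \<in> syt_on (col_diagram k c) N"
  shows "(\<Prod>m\<in>{1..N}. p (col_word (col_diagram k c) N Q m)) = (\<Prod>j<k. (p j :: real) ^ c j)"
proof -
  have b: "bij_betw Q (col_diagram k c) {1..N}" by (rule syt_on_bij[OF Q])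
  have "(\<Prod>m\<in>{1..N}. p (col_word (col_diagram k c) N Q m))
      = (\<Prod>u\<in>col_diagram k c. p (col_word (col_diagram k c) N Q (Q u)))"
    by (rule prod.reindex_bij_betw[OF b, symmetric])
  also have "\<dots> = (\<Prod>u\<in>col_diagram k c. p (snd u))"
  proof (rule prod.cong[OF refl])
    fix u assume u: "u \<in> col_diagram k c"
    then have "Q u \<in> {1..N}" "inv_into (col_diagram k c) Q (Q u) = u"
      using b bij_betwE by (auto simp: bij_betw_def)
    then show "p (col_word (col_diagram k c) N Q (Q u)) = p (snd u)" by (simp add: col_word_def)
  qed
  also have "\<dots> = (\<Prod>j<k. p j ^ c j)" by (rule prod_col_diagram)
  finally show ?thesis .
qed

lemma card_syt_on_mult_prod_le_1:
  fixes p :: "nat \<Rightarrow> real"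
  assumes p: "\<And>j. 0 \<le> p j" "(\<Sum>j<k. p j) = 1"
  shows "card (syt_on (col_diagram k c) N) * (\<Prod>j<k. p j ^ c j) \<le> 1"
proof -
  let ?D = "col_diagram k c"
  let ?weight = "\<lambda>w. \<Prod>m\<in>{1..N}. p (w m)"
  have words: "col_word ?D N ` syt_on ?D N \<subseteq> {1..N} \<rightarrow>\<^sub>E {..<k}"
  proof (rule image_subsetI, rule PiE_I)
    fix Q m assume Q: "Q \<in> syt_on ?D N" and "m \<in> {1..N}"
    then have "inv_into ?D Q m \<in> ?D" using bij_betw_inv_into[OF syt_on_bij[OF Q]] bij_betwE by blast
    with \<open>m \<in> {1..N}\<close> show "col_word ?D N Q m \<in> {..<k}" by (auto simp: col_word_def col_diagram_snd)
  qed (auto simp: col_word_def)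
  have "card (syt_on ?D N) * (\<Prod>j<k. p j ^ c j) = (\<Sum>Q\<in>syt_on ?D N. \<Prod>j<k. p j ^ c j)"
    by simp
  also have "\<dots> = (\<Sum>Q\<in>syt_on ?D N. ?weight (col_word ?D N Q))"
  proof (rule sum.cong[OF refl])
    fix Q assume "Q \<in> syt_on ?D N"
    then show "(\<Prod>j<k. p j ^ c j) = ?weight (col_word ?D N Q)" by (rule prod_col_word[symmetric])
  qed
  also have "\<dots> = (\<Sum>w\<in>col_word ?D N ` syt_on ?D N. ?weight w)"
    by (rule sum.reindex[OF inj_on_col_word, symmetric, unfolded comp_def])
  also have "\<dots> \<le> (\<Sum>w\<in>{1..N} \<rightarrow>\<^sub>E {..<k}. ?weight w)"
    by (rule sum_mono2) (use words p in \<open>auto simp: finite_PiE intro!: prod_nonneg\<close>)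
  also have "\<dots> = (\<Prod>m\<in>{1..N}. \<Sum>j<k. p j)" by (rule prod_sum_PiE[symmetric]) auto
  finally show ?thesis using p by simp
qed

section \<open>Standardization\<close>

text \<open>Standardization numbers the cells by increasing entry, breaking ties (which lie in
  distinct columns) from left to right.\<close>

definition std_key :: "nat \<Rightarrow> (nat \<times> nat \<Rightarrow> nat) \<Rightarrow> nat \<times> nat \<Rightarrow> nat" where
  "std_key k P u = P u * k + snd u"

definition standardize :: "nat \<Rightarrow> (nat \<Rightarrow> nat) \<Rightarrow> (nat \<times> nat \<Rightarrow> nat) \<Rightarrow> nat \<times> nat \<Rightarrow> nat" where
  "standardize k c P u = (if u \<in> col_diagram k c then rank_in (col_diagram k c) (std_key k P) u else 0)"

lemma std_key_less_imp:
  assumes "std_key k P u < std_key k P v" "snd u < k" "snd v < k"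
  shows "P u \<le> P v"
proof (rule ccontr)
  assume "\<not> P u \<le> P v"
  then have "Suc (P v) * k \<le> P u * k" by (intro mult_le_mono1) simp
  then show False using assms unfolding std_key_def by simp
qed

lemma inj_on_std_key:
  assumes P: "P \<in> ssyt_on (col_diagram k c) t"
  shows "inj_on (std_key k P) (col_diagram k c)"
proof (rule inj_onI)
  fix u v assume u: "u \<in> col_diagram k c" and v: "v \<in> col_diagram k c" and eq: "std_key k P u = std_key k P v"
  obtain i j i' j' where uv: "u = (i, j)" "v = (i', j')" by (cases u, cases v)
  have jk: "j < k" "j' < k" "i < c j" "i' < c j'" using u v uv by (auto simp: col_diagram_def)
  have "(P u * k + j) mod k = (P v * k + j') mod k" using eq uv by (simp add: std_key_def)
  then have jj: "j = j'" using jk by simp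
  then have "P (i, j) = P (i', j)" using eq uv jk by (simp add: std_key_def)
  moreover have "inj_on (\<lambda>i. P (i, j)) {..<c j}"
    by (rule strict_mono_on_imp_inj_on[OF strict_mono_on_column[OF ssyt_on_col[OF P] jk(1)]])
  ultimately have "i = i'" using jk jj by (simp add: inj_on_def)
  then show "u = v" using uv jj by simp
qed

lemma bij_betw_standardize:
  assumes P: "P \<in> ssyt_on (col_diagram k c) t"
  shows "bij_betw (standardize k c P) (col_diagram k c) {1..card (col_diagram k c)}"
  using bij_betw_rank_in[OF finite_col_diagram inj_on_std_key[OF P]]
  by (rule bij_betw_cong[THEN iffD1, rotated]) (simp add: standardize_def)

lemma standardize_less_iff:
  assumes P: "P \<in> ssyt_on (col_diagram k c) t" and u: "u \<in> col_diagram k c" and v: "v \<in> col_diagram k c"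
  shows "standardize k c P u < standardize k c P v \<longleftrightarrow> std_key k P u < std_key k P v"
  using rank_in_less_iff[OF finite_col_diagram inj_on_std_key[OF P] u v] u v
  by (simp add: standardize_def)

lemma standardize_syt_on:
  assumes c: "antimono_on {..<k} c" and P: "P \<in> ssyt_on (col_diagram k c) t"
  shows "standardize k c P \<in> syt_on (col_diagram k c) (card (col_diagram k c))"
proof -
  have row: "standardize k c P (i, j) < standardize k c P (i, Suc j)"
    if ij: "(i, Suc j) \<in> col_diagram k c" for i j
  proof -
    have "P (i, j) * k \<le> P (i, Suc j) * k" using ssyt_on_row[OF P ij] by (rule mult_le_mono1)
    then have "std_key k P (i, j) < std_key k P (i, Suc j)" unfolding std_key_def snd_conv by linarith
    then show ?thesis using standardize_less_iff[OF P col_diagram_Suc_col[OF c ij] ij] by simp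
  qed
  have col: "standardize k c P (i, j) < standardize k c P (Suc i, j)"
    if ij: "(Suc i, j) \<in> col_diagram k c" for i j
  proof -
    have "Suc (P (i, j)) * k \<le> P (Suc i, j) * k" using ssyt_on_col[OF P ij] by (intro mult_le_mono1) simp
    then have "P (i, j) * k + k \<le> P (Suc i, j) * k" by simp
    moreover have "(i, j) \<in> col_diagram k c" "j < k" using ij by (auto simp: col_diagram_def)
    ultimately have "std_key k P (i, j) < std_key k P (Suc i, j)" unfolding std_key_def snd_conv by linarith
    then show ?thesis using standardize_less_iff[OF P \<open>(i, j) \<in> col_diagram k c\<close> ij] by simp
  qed
  have "\<forall>x. x \<notin> col_diagram k c \<longrightarrow> standardize k c P x = 0" by (simp add: standardize_def)
  then show ?thesis unfolding syt_on_def using bij_betw_standardize[OF P] row col by blast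
qed

text \<open>The values \<open>P u + Q u\<close>, with \<open>Q\<close> the standardization of \<open>P\<close>, strictly increase
  in the standard order; hence they form a \<open>card D\<close>-subset of \<open>{1..t + card D}\<close>, and this set
  together with \<open>Q\<close> determines \<open>P\<close>.\<close>

lemma std_sum_less:
  assumes P: "P \<in> ssyt_on (col_diagram k c) t" and u: "u \<in> col_diagram k c" and v: "v \<in> col_diagram k c"
    and less: "standardize k c P u < standardize k c P v"
  shows "P u + standardize k c P u < P v + standardize k c P v"
proof -
  have "std_key k P u < std_key k P v" using standardize_less_iff[OF P u v] less by simp
  then have "P u \<le> P v" using std_key_less_imp col_diagram_snd u v by blast
  then show ?thesis using less by simp
qed

lemma standardize_inj:
  assumes P: "P \<in> ssyt_on (col_diagram k c) t" and P': "P' \<in> ssyt_on (col_diagram k c) t"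
    and eqQ: "standardize k c P = standardize k c P'"
    and eqA: "(\<lambda>u. P u + standardize k c P u) ` col_diagram k c
            = (\<lambda>u. P' u + standardize k c P' u) ` col_diagram k c"
  shows "P = P'"
proof
  fix u
  let ?D = "col_diagram k c" and ?Q = "standardize k c P" and ?I = "{1..card (col_diagram k c)}"
  have Q: "bij_betw ?Q ?D ?I" by (rule bij_betw_standardize[OF P])
  define g where "g R m = R (inv_into ?D ?Q m) + m" for R m
  have inv: "inv_into ?D ?Q m \<in> ?D" "?Q (inv_into ?D ?Q m) = m" if "m \<in> ?I" for m
    using bij_betwE[OF bij_betw_inv_into[OF Q]] bij_betw_inv_into_right[OF Q that] that by auto
  have g: "strict_mono_on ?I (g R)" "g R ` ?I = (\<lambda>u. R u + ?Q u) ` ?D"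
    if R: "R \<in> ssyt_on ?D t" "standardize k c R = ?Q" for R
  proof -
    show "strict_mono_on ?I (g R)"
    proof (rule strict_mono_onI)
      fix m m' assume m: "m \<in> ?I" "m' \<in> ?I" "m < m'"
      then have "standardize k c R (inv_into ?D ?Q m) < standardize k c R (inv_into ?D ?Q m')"
        using inv R(2) by simp
      then have "R (inv_into ?D ?Q m) + ?Q (inv_into ?D ?Q m) < R (inv_into ?D ?Q m') + ?Q (inv_into ?D ?Q m')"
        using std_sum_less[OF R(1) inv(1)[OF m(1)] inv(1)[OF m(2)]] R(2) by simp
      then show "g R m < g R m'" using inv m by (simp add: g_def)
    qed
    have "g R ` ?I = (\<lambda>m. R (inv_into ?D ?Q m) + ?Q (inv_into ?D ?Q m)) ` ?I"
      by (rule image_cong) (simp_all add: g_def inv)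
    also have "\<dots> = (\<lambda>u. R u + ?Q u) ` (inv_into ?D ?Q ` ?I)" by (simp only: image_image)
    also have "inv_into ?D ?Q ` ?I = ?D" using bij_betw_inv_into[OF Q] by (simp add: bij_betw_def)
    finally show "g R ` ?I = (\<lambda>u. R u + ?Q u) ` ?D" .
  qed
  show "P u = P' u"
  proof (cases "u \<in> ?D")
    case True
    then have "?Q u \<in> ?I" "inv_into ?D ?Q (?Q u) = u"
      using Q by (auto simp: bij_betw_def inv_into_f_f)
    moreover have "g P (?Q u) = g P' (?Q u)"
      using g[OF P refl] g[OF P' eqQ[symmetric]] eqA eqQ \<open>?Q u \<in> ?I\<close>
      by (intro strict_mono_on_eq_if_image_eq[of ?I]) auto
    ultimately show ?thesis by (simp add: g_def)
  qed (use ssyt_on_outside[OF P] ssyt_on_outside[OF P'] in simp)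
qed

lemma card_ssyt_on_le_syt_choose:
  assumes c: "antimono_on {..<k} c"
  shows "card (ssyt_on (col_diagram k c) t)
    \<le> card (syt_on (col_diagram k c) (card (col_diagram k c))) * ((t + card (col_diagram k c)) choose card (col_diagram k c))"
proof -
  let ?D = "col_diagram k c" and ?n = "card (col_diagram k c)"
  let ?A = "\<lambda>P. (\<lambda>u. P u + standardize k c P u) ` ?D"
  have "inj_on (\<lambda>P. (standardize k c P, ?A P)) (ssyt_on ?D t)"
    by (rule inj_onI) (use standardize_inj in auto)
  moreover have "(\<lambda>P. (standardize k c P, ?A P)) ` ssyt_on ?D t
      \<subseteq> syt_on ?D ?n \<times> {A. A \<subseteq> {1..t + ?n} \<and> card A = ?n}"
  proof (rule image_subsetI)
    fix P assume P: "P \<in> ssyt_on ?D t"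
    have Q: "bij_betw (standardize k c P) ?D {1..?n}" by (rule bij_betw_standardize[OF P])
    have "?A P \<subseteq> {1..t + ?n}"
    proof (rule image_subsetI)
      fix u assume "u \<in> ?D"
      then have "P u \<in> {1..t}" "standardize k c P u \<in> {1..?n}"
        using ssyt_on_range[OF P] bij_betwE[OF Q] by auto
      then show "P u + standardize k c P u \<in> {1..t + ?n}" by auto
    qed
    moreover have "inj_on (\<lambda>u. P u + standardize k c P u) ?D"
    proof (rule inj_onI, rule ccontr)
      fix u v assume u: "u \<in> ?D" and v: "v \<in> ?D" and "u \<noteq> v"
        and eq: "P u + standardize k c P u = P v + standardize k c P v"
      then have "standardize k c P u \<noteq> standardize k c P v"
        using inj_onD[OF bij_betw_imp_inj_on[OF Q] _ u v] by blast
      then show False using std_sum_less[OF P u v] std_sum_less[OF P v u] eq by linarith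
    qed
    ultimately show "(standardize k c P, ?A P) \<in> syt_on ?D ?n \<times> {A. A \<subseteq> {1..t + ?n} \<and> card A = ?n}"
      using standardize_syt_on[OF c P] by (simp add: card_image)
  qed
  moreover have "finite (syt_on ?D ?n \<times> {A. A \<subseteq> {1..t + ?n} \<and> card A = ?n})"
    using finite_syt_on[OF finite_col_diagram] by simp
  ultimately have "card (ssyt_on ?D t) \<le> card (syt_on ?D ?n \<times> {A. A \<subseteq> {1..t + ?n} \<and> card A = ?n})"
    by (rule card_inj_on_le)
  also have "\<dots> = card (syt_on ?D ?n) * ((t + ?n) choose ?n)"
    by (simp add: card_cartesian_product n_subsets)
  finally show ?thesis .
qed

section \<open>Factorial estimates\<close>

lemma Suc_pow_le_exp_mult_pow: "real (Suc m) ^ m \<le> exp 1 * real m ^ m"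
proof (cases "m = 0")
  case True then show ?thesis by simp
next
  case False
  then have mp: "real m > 0" by simp
  have "1 + 1 / real m \<le> exp (1 / real m)" by (rule exp_ge_add_one_self)
  then have "(1 + 1 / real m) ^ m \<le> exp (1 / real m) ^ m" by (rule power_mono) (use mp in simp)
  also have "\<dots> = exp (real m * (1 / real m))" by (rule exp_of_nat_mult[symmetric])
  also have "\<dots> = exp 1" using mp by simp
  finally have h: "(1 + 1 / real m) ^ m \<le> exp 1" .
  have eq: "real (Suc m) = real m * (1 + 1 / real m)" using mp by (simp add: field_simps)
  have "real (Suc m) ^ m = (real m * (1 + 1 / real m)) ^ m" by (subst eq) (rule refl)
  also have "\<dots> = real m ^ m * (1 + 1 / real m) ^ m" by (simp add: power_mult_distrib)
  also have "\<dots> \<le> real m ^ m * exp 1" using h by (intro mult_left_mono) auto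
  finally show ?thesis by (simp add: mult.commute)
qed

lemma pow_le_fact_mult_exp: "real m ^ m \<le> fact m * exp (real m)"
proof (induct m)
  case 0 then show ?case by simp
next
  case (Suc m)
  have "real (Suc m) ^ Suc m = real (Suc m) * real (Suc m) ^ m" by simp
  also have "\<dots> \<le> real (Suc m) * (exp 1 * real m ^ m)" using Suc_pow_le_exp_mult_pow by (intro mult_left_mono) auto
  also have "\<dots> \<le> real (Suc m) * (exp 1 * (fact m * exp (real m)))" using Suc by (intro mult_left_mono) auto
  also have "\<dots> = fact (Suc m) * exp (real (Suc m))" by (simp add: exp_add algebra_simps)
  finally show ?case .
qed

lemma exp_mult_pow_Suc_le:
  assumes m: "1 \<le> m"
  shows "exp 1 * real m ^ Suc m \<le> real (Suc m) ^ Suc m"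
proof -
  have mp: "real m > 0" using m by simp
  let ?r = "real (Suc m) / real m"
  have rp: "?r > 0" using mp by simp
  have "ln (real m / real (Suc m)) \<le> real m / real (Suc m) - 1" by (rule ln_le_minus_one) (use mp in simp)
  also have "\<dots> = - (1 / real (Suc m))" by (simp add: field_simps)
  finally have "ln (real m / real (Suc m)) \<le> - (1 / real (Suc m))" .
  moreover have "ln (real m / real (Suc m)) = - ln ?r" using mp by (simp add: ln_div)
  ultimately have lr: "1 / real (Suc m) \<le> ln ?r" by simp
  have "1 \<le> real (Suc m) * ln ?r" using lr by (simp add: field_simps)
  then have "exp 1 \<le> exp (real (Suc m) * ln ?r)" by simp
  also have "\<dots> = exp (ln ?r) ^ Suc m" by (rule exp_of_nat_mult)
  also have "\<dots> = ?r ^ Suc m" using rp by simp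
  finally have "exp 1 \<le> ?r ^ Suc m" .
  then have "exp 1 * real m ^ Suc m \<le> ?r ^ Suc m * real m ^ Suc m" by (intro mult_right_mono) auto
  also have "\<dots> = real (Suc m) ^ Suc m" using mp by (simp add: power_mult_distrib[symmetric])
  finally show ?thesis .
qed

lemma fact_mult_exp_le_pow_Suc: "1 \<le> m \<Longrightarrow> fact m * exp (real m) \<le> exp 1 * real m ^ Suc m"
proof (induct m rule: dec_induct)
  case base then show ?case by simp
next
  case (step m)
  have "fact (Suc m) * exp (real (Suc m)) = real (Suc m) * exp 1 * (fact m * exp (real m))"
    by (simp add: exp_add algebra_simps)
  also have "\<dots> \<le> real (Suc m) * exp 1 * (exp 1 * real m ^ Suc m)" using step by (intro mult_left_mono) auto
  also have "\<dots> \<le> real (Suc m) * exp 1 * real (Suc m) ^ Suc m" using exp_mult_pow_Suc_le[OF step(1)] by (intro mult_left_mono) auto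
  also have "\<dots> = exp 1 * real (Suc m) ^ Suc (Suc m)" by simp
  finally show ?case .
qed

lemma fact_mult_exp_le: "fact m * exp (real m) \<le> exp 1 * real (Suc m) * real m ^ m"
proof (cases "m = 0")
  case True then show ?thesis by simp
next
  case False
  then have "fact m * exp (real m) \<le> exp 1 * real m ^ Suc m" using fact_mult_exp_le_pow_Suc by simp
  also have "\<dots> = exp 1 * real m * real m ^ m" by simp
  also have "\<dots> \<le> exp 1 * real (Suc m) * real m ^ m" by (intro mult_right_mono mult_left_mono) auto
  finally show ?thesis .
qed

lemma fact_add_le_fact_mult_pow: "fact (a + b) \<le> (fact a * real (a + b) ^ b :: real)"
proof (induct b)
  case 0 then show ?case by simp
next
  case (Suc b)
  have "fact (a + Suc b) = real (Suc (a + b)) * fact (a + b)" by simp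
  also have "\<dots> \<le> real (Suc (a + b)) * (fact a * real (a + b) ^ b)" using Suc by (intro mult_left_mono) auto
  also have "\<dots> \<le> real (Suc (a + b)) * (fact a * real (a + Suc b) ^ b)"
    by (intro mult_left_mono power_mono) auto
  also have "\<dots> = fact a * real (a + Suc b) ^ Suc b" by simp
  finally show ?case .
qed

lemma fact_mult_fact_diff_le:
  assumes "c \<le> m"
  shows "(fact m * fact (m + j - c) :: real) \<le> fact (m + j) * fact (m - c)"
proof (induct j)
  case 0 then show ?case using assms by simp
next
  case (Suc j)
  have e: "m + Suc j - c = Suc (m + j - c)" using assms by simp
  have "fact m * fact (m + Suc j - c) = real (Suc (m + j - c)) * (fact m * fact (m + j - c))"
    unfolding e by simp
  also have "\<dots> \<le> real (Suc (m + j - c)) * (fact (m + j) * fact (m - c))" using Suc by (intro mult_left_mono) auto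
  also have "\<dots> \<le> real (Suc (m + j)) * (fact (m + j) * fact (m - c))" using assms by (intro mult_right_mono) auto
  also have "\<dots> = fact (m + Suc j) * fact (m - c)" by simp
  finally show ?case .
qed

lemma fact_diff_mult_pow_le_fact:
  assumes "c \<le> m"
  shows "(fact (m - c) * real (m - c) ^ c :: real) \<le> fact m"
  using assms
proof (induct c)
  case 0 then show ?case by simp
next
  case (Suc c)
  have e: "m - c = Suc (m - Suc c)" using Suc.prems by simp
  have "fact (m - Suc c) * real (m - Suc c) ^ Suc c = (real (m - Suc c) * fact (m - Suc c)) * real (m - Suc c) ^ c"
    by simp
  also have "\<dots> \<le> fact (m - c) * real (m - c) ^ c"
    unfolding e by (intro mult_mono power_mono) auto
  also have "\<dots> \<le> fact m" using Suc by simp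
  finally show ?case .
qed

lemma fact_le_fact_diff_mult_pow:
  assumes "n \<le> N"
  shows "(fact N :: real) \<le> fact (N - n) * real N ^ n"
  using assms
proof (induct n)
  case 0 then show ?case by simp
next
  case (Suc n)
  have e: "N - n = Suc (N - Suc n)" using Suc.prems by simp
  have "fact N \<le> fact (N - n) * real N ^ n" using Suc by simp
  also have "\<dots> = (real (Suc (N - Suc n)) * fact (N - Suc n)) * real N ^ n" unfolding e by simp
  also have "\<dots> \<le> (real N * fact (N - Suc n)) * real N ^ n"
    using Suc.prems by (intro mult_right_mono) auto
  also have "\<dots> = fact (N - Suc n) * real N ^ Suc n" by simp
  finally show ?case .
qed

lemma choose_mult_fact_le_pow:
  assumes "n \<le> N"
  shows "real (N choose n) * fact n \<le> real N ^ n"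
proof -
  have "(fact N :: real) = of_nat (fact n * fact (N - n) * (N choose n))"
    by (simp only: binomial_fact_lemma[OF assms] of_nat_fact)
  then have "fact N = real (N choose n) * fact n * (fact (N - n) :: real)"
    by (simp add: of_nat_mult mult_ac)
  then have "real (N choose n) * fact n * fact (N - n) \<le> fact (N - n) * real N ^ n"
    using fact_le_fact_diff_mult_pow[OF assms] by simp
  then show ?thesis by (simp add: mult.commute)
qed

lemma choose_mult_bernoulli_le_1:
  assumes "c \<le> n" "0 < n"
  shows "real (n choose c) * ((real c / real n) ^ c * (real (n - c) / real n) ^ (n - c)) \<le> 1"
proof -
  let ?p = "real c / real n"
  have q: "real (n - c) / real n = 1 - ?p" using assms by (simp add: of_nat_diff field_simps)
  have p01: "0 \<le> ?p" "?p \<le> 1" using assms by auto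
  have "1 = (?p + (1 - ?p)) ^ n" by simp
  also have "\<dots> = (\<Sum>i\<le>n. real (n choose i) * ?p ^ i * (1 - ?p) ^ (n - i))" by (rule binomial_ring)
  finally have s: "(\<Sum>i\<le>n. real (n choose i) * ?p ^ i * (1 - ?p) ^ (n - i)) = 1" by simp
  have "real (n choose c) * ?p ^ c * (1 - ?p) ^ (n - c) \<le> (\<Sum>i\<le>n. real (n choose i) * ?p ^ i * (1 - ?p) ^ (n - i))"
    by (rule member_le_sum[of c "{..n}" "\<lambda>i. real (n choose i) * ?p ^ i * (1 - ?p) ^ (n - i)"])
       (use assms p01 in auto)
  then show ?thesis unfolding q s by (simp add: mult.assoc)
qed

lemma choose_mult_bernoulli_lower:
  assumes cn: "c \<le> n" and n: "0 < n"
  shows "1 \<le> real (n choose c) * ((real c / real n) ^ c * (real (n - c) / real n) ^ (n - c)) * (exp 1 ^ 2 * (real n + 1) ^ 2)"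
proof -
  let ?C = "real (n choose c)"
  have fn: "(fact n :: real) = ?C * fact c * fact (n - c)"
  proof -
    have "(fact n :: real) = of_nat (fact c * fact (n - c) * (n choose c))"
      by (simp only: binomial_fact_lemma[OF cn] of_nat_fact)
    then show ?thesis by (simp add: of_nat_mult mult_ac)
  qed
  have en: "exp (real n) = exp (real c) * exp (real (n - c))" using cn by (simp add: exp_add[symmetric] of_nat_diff)
  have b1: "fact c * exp (real c) \<le> exp 1 * (real n + 1) * real c ^ c"
  proof -
    have "fact c * exp (real c) \<le> exp 1 * real (Suc c) * real c ^ c" by (rule fact_mult_exp_le)
    also have "\<dots> \<le> exp 1 * (real n + 1) * real c ^ c" using cn by (intro mult_right_mono mult_left_mono) auto
    finally show ?thesis .
  qed
  have b2: "fact (n - c) * exp (real (n - c)) \<le> exp 1 * (real n + 1) * real (n - c) ^ (n - c)"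
  proof -
    have "fact (n - c) * exp (real (n - c)) \<le> exp 1 * real (Suc (n - c)) * real (n - c) ^ (n - c)" by (rule fact_mult_exp_le)
    also have "\<dots> \<le> exp 1 * (real n + 1) * real (n - c) ^ (n - c)" using cn by (intro mult_right_mono mult_left_mono) auto
    finally show ?thesis .
  qed
  have "real n ^ n \<le> fact n * exp (real n)" by (rule pow_le_fact_mult_exp)
  also have "\<dots> = ?C * ((fact c * exp (real c)) * (fact (n - c) * exp (real (n - c))))"
    unfolding fn en by (simp add: mult_ac)
  also have "\<dots> \<le> ?C * ((exp 1 * (real n + 1) * real c ^ c) * (exp 1 * (real n + 1) * real (n - c) ^ (n - c)))"
    by (intro mult_left_mono mult_mono b1 b2) auto
  also have "\<dots> = ?C * (real c ^ c * real (n - c) ^ (n - c)) * (exp 1 ^ 2 * (real n + 1) ^ 2)"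
    by (simp add: power2_eq_square mult_ac)
  finally have main: "real n ^ n \<le> ?C * (real c ^ c * real (n - c) ^ (n - c)) * (exp 1 ^ 2 * (real n + 1) ^ 2)" .
  have nn: "real n ^ n > 0" using n by simp
  have eq: "(real c / real n) ^ c * (real (n - c) / real n) ^ (n - c) = (real c ^ c * real (n - c) ^ (n - c)) / real n ^ n"
  proof -
    have "real n ^ c * real n ^ (n - c) = real n ^ n" using cn by (simp add: power_add[symmetric])
    then show ?thesis by (simp add: power_divide)
  qed
  show ?thesis unfolding eq using main nn by (simp add: field_simps)
qed

lemma multinomial_mult_lower:
  assumes s: "(\<Sum>j<k. c j) = n" and n: "0 < n"
  shows "1 \<le> fact n / (\<Prod>j<k. fact (c j)) * (\<Prod>j<k. (real (c j) / real n) ^ (c j)) * (exp 1 * (real n + 1)) ^ k"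
proof -
  have cn: "\<And>j. j < k \<Longrightarrow> c j \<le> n" using s by (metis finite_lessThan lessThan_iff member_le_sum zero_le)
  have en: "exp (real n) = (\<Prod>j<k. exp (real (c j)))" using s by (simp add: exp_sum[symmetric] of_nat_sum[symmetric])
  have pn: "(\<Prod>j<k. real n ^ c j) = real n ^ n"
  proof -
    have "real n ^ (\<Sum>j<k. c j) = (\<Prod>j<k. real n ^ c j)" by (rule power_sum)
    then show ?thesis using s by simp
  qed
  have b: "(\<Prod>j<k. fact (c j) * exp (real (c j))) \<le> (\<Prod>j<k. exp 1 * (real n + 1) * real (c j) ^ c j)"
  proof (rule prod_mono)
    fix j assume j: "j \<in> {..<k}"
    have "fact (c j) * exp (real (c j)) \<le> exp 1 * real (Suc (c j)) * real (c j) ^ c j" by (rule fact_mult_exp_le)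
    also have "\<dots> \<le> exp 1 * (real n + 1) * real (c j) ^ c j" using cn j by (intro mult_right_mono mult_left_mono) auto
    finally show "0 \<le> fact (c j) * exp (real (c j)) \<and> fact (c j) * exp (real (c j)) \<le> exp 1 * (real n + 1) * real (c j) ^ c j"
      by simp
  qed
  have Fp: "(\<Prod>j<k. fact (c j) :: real) > 0" by (intro prod_pos) auto
  have "real n ^ n * (\<Prod>j<k. fact (c j)) \<le> fact n * exp (real n) * (\<Prod>j<k. fact (c j))"
    using pow_le_fact_mult_exp[of n] Fp by (intro mult_right_mono) auto
  also have "\<dots> = fact n * (\<Prod>j<k. fact (c j) * exp (real (c j)))"
    unfolding en by (simp add: prod.distrib mult_ac)
  also have "\<dots> \<le> fact n * (\<Prod>j<k. exp 1 * (real n + 1) * real (c j) ^ c j)"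
    by (intro mult_left_mono b) auto
  also have "\<dots> = fact n * ((exp 1 * (real n + 1)) ^ k * (\<Prod>j<k. real (c j) ^ c j))"
    by (simp add: prod.distrib)
  finally have main: "real n ^ n * (\<Prod>j<k. fact (c j)) \<le> fact n * ((exp 1 * (real n + 1)) ^ k * (\<Prod>j<k. real (c j) ^ c j))" .
  have eq: "(\<Prod>j<k. (real (c j) / real n) ^ (c j)) = (\<Prod>j<k. real (c j) ^ c j) / real n ^ n"
    unfolding pn[symmetric] by (simp add: power_divide prod_dividef)
  have nn: "real n ^ n > 0" using n by simp
  show ?thesis unfolding eq using main nn Fp by (simp add: field_simps)
qed

lemma fact_shifted_le:
  assumes "c \<le> n" "j < k"
  shows "(fact (c + (k - 1 - j)) :: real) \<le> fact c * (real n + real k) ^ k"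
proof -
  have "(fact (c + (k - 1 - j)) :: real) \<le> fact c * real (c + (k - 1 - j)) ^ (k - 1 - j)" by (rule fact_add_le_fact_mult_pow)
  also have "\<dots> \<le> fact c * (real n + real k) ^ (k - 1 - j)"
    using assms by (intro mult_left_mono power_mono) auto
  also have "\<dots> \<le> fact c * (real n + real k) ^ k"
    using assms by (intro mult_left_mono power_increasing) auto
  finally show ?thesis .
qed

lemma col_weight_ge_prod_choose:
  assumes cn: "\<forall>j<k. c j \<le> n"
  shows "(\<Prod>j<k. real (n choose c j)) / (real n + real k) ^ (k * k) \<le> col_weight k c n"
proof -
  have P: "(real n + real k) ^ k > 0" using cn by (cases k) auto
  have "(\<Prod>j<k. real (n choose c j)) / (real n + real k) ^ (k * k) = (\<Prod>j<k. real (n choose c j) / (real n + real k) ^ k)"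
    by (simp add: prod_dividef power_mult)
  also have "\<dots> \<le> col_weight k c n" unfolding col_weight_def
  proof (rule prod_mono)
    fix j assume j: "j \<in> {..<k}"
    have c: "c j \<le> n" using cn j by auto
    let ?F1 = "fact (c j + (k - 1 - j)) :: real"
    have F1: "?F1 \<le> fact (c j) * (real n + real k) ^ k" using fact_shifted_le c j by auto
    have R: "(fact n * fact (n + j - c j) :: real) \<le> fact (n + j) * fact (n - c j)" by (rule fact_mult_fact_diff_le[OF c])
    have C: "real (n choose c j) = fact n / (fact (c j) * fact (n - c j))" by (rule binomial_fact[OF c])
    have pos: "?F1 > 0" "(fact (n + j - c j) :: real) > 0" "(fact (c j) :: real) > 0" "(fact (n - c j) :: real) > 0" by auto
    have "fact n * (?F1 * fact (n + j - c j)) \<le> fact n * (fact (c j) * (real n + real k) ^ k * fact (n + j - c j))"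
      using F1 by (intro mult_left_mono mult_right_mono) auto
    also have "\<dots> = (fact n * fact (n + j - c j)) * (fact (c j) * (real n + real k) ^ k)" by (simp add: mult_ac)
    also have "\<dots> \<le> (fact (n + j) * fact (n - c j)) * (fact (c j) * (real n + real k) ^ k)"
      using R P by (intro mult_right_mono) auto
    finally have key: "fact n * (?F1 * fact (n + j - c j)) \<le> fact (n + j) * (fact (c j) * fact (n - c j) * (real n + real k) ^ k)"
      by (simp add: mult_ac)
    have "real (n choose c j) / (real n + real k) ^ k = fact n / (fact (c j) * fact (n - c j) * (real n + real k) ^ k)"
      unfolding C by simp
    also have "\<dots> \<le> fact (n + j) / (?F1 * fact (n + j - c j))"
      using key pos P by (simp add: divide_simps)
    finally show "0 \<le> real (n choose c j) / (real n + real k) ^ k \<and>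
        real (n choose c j) / (real n + real k) ^ k \<le> fact (n + j) / (?F1 * fact (n + j - c j))"
      using P by simp
  qed
  finally show ?thesis .
qed

lemma col_weight_ge_pow:
  assumes cn: "\<forall>j<k. c j \<le> n" and nT: "n \<le> T"
  shows "(\<Prod>j<k. real (T - n) ^ c j / (fact (c j) * (real n + real k) ^ k)) \<le> col_weight k c T"
  unfolding col_weight_def
proof (rule prod_mono)
  fix j assume j: "j \<in> {..<k}"
  have c: "c j \<le> n" using cn j by auto
  let ?F1 = "fact (c j + (k - 1 - j)) :: real"
  have P: "(real n + real k) ^ k > 0" using j by auto
  have F1: "?F1 \<le> fact (c j) * (real n + real k) ^ k" using fact_shifted_le c j by auto
  have G: "(fact (T + j - c j) * real (T + j - c j) ^ c j :: real) \<le> fact (T + j)"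
    using fact_diff_mult_pow_le_fact[of "c j" "T + j"] c nT by simp
  have G2: "real (T - n) ^ c j \<le> real (T + j - c j) ^ c j"
    using c nT by (intro power_mono) auto
  have pos: "?F1 > 0" "(fact (T + j - c j) :: real) > 0" "(fact (c j) :: real) > 0" by auto
  have "real (T - n) ^ c j * (?F1 * fact (T + j - c j)) \<le> real (T + j - c j) ^ c j * (fact (c j) * (real n + real k) ^ k * fact (T + j - c j))"
    using G2 F1 by (intro mult_mono) auto
  also have "\<dots> = (fact (T + j - c j) * real (T + j - c j) ^ c j) * (fact (c j) * (real n + real k) ^ k)" by (simp add: mult_ac)
  also have "\<dots> \<le> fact (T + j) * (fact (c j) * (real n + real k) ^ k)" using G P by (intro mult_right_mono) auto
  finally have key: "real (T - n) ^ c j * (?F1 * fact (T + j - c j)) \<le> fact (T + j) * (fact (c j) * (real n + real k) ^ k)" .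
  have "real (T - n) ^ c j / (fact (c j) * (real n + real k) ^ k) \<le> fact (T + j) / (?F1 * fact (T + j - c j))"
    using key pos P by (simp add: divide_simps)
  then show "0 \<le> real (T - n) ^ c j / (fact (c j) * (real n + real k) ^ k) \<and>
      real (T - n) ^ c j / (fact (c j) * (real n + real k) ^ k) \<le> fact (T + j) / (?F1 * fact (T + j - c j))"
    using P by simp
qed

section \<open>Two-sided estimates for the product of the counts\<close>

definition self_powr :: "real \<Rightarrow> real" where
  "self_powr x = pow0 x x"

definition col_entropy :: "nat \<Rightarrow> (nat \<Rightarrow> nat) \<Rightarrow> nat \<Rightarrow> real" where
  "col_entropy k c n = (\<Prod>j<k. self_powr (c j / n) ^ 2 * self_powr (1 - c j / n))"

definition stirling_loss :: "nat \<Rightarrow> nat \<Rightarrow> real" where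
  "stirling_loss k n = (exp 1 ^ 2 * (real n + 1) ^ 2) ^ k * (real n + real k) ^ (k * k)
     * ((exp 1 * (real n + 1)) ^ k * (real n + real k) ^ (k * k))"

lemma self_powr_pos: "0 \<le> x \<Longrightarrow> 0 < self_powr x"
  unfolding self_powr_def pow0_def by auto

lemma pow0_double: "0 \<le> a \<Longrightarrow> pow0 a (2 * a) = self_powr a ^ 2"
  unfolding self_powr_def pow0_def by (auto simp: power2_eq_square powr_add[symmetric])

lemma self_powr_of_nat_div:
  assumes "c \<le> n" "0 < n"
  shows "(real c / real n) ^ c = self_powr (real c / real n) ^ n"
proof (cases "c = 0")
  case False
  let ?x = "real c / real n"
  have "0 < ?x" using False assms by simp
  then have "self_powr ?x ^ n = ?x powr (real n * ?x)"
    using assms False by (simp add: self_powr_def pow0_def powr_power)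
  also have "\<dots> = ?x ^ c" using \<open>0 < ?x\<close> assms False by (simp add: powr_realpow)
  finally show ?thesis ..
qed (simp add: self_powr_def pow0_def)

lemma col_le_of_sum_eq:
  fixes c :: "nat \<Rightarrow> nat"
  assumes "(\<Sum>j<k. c j) = (n :: nat)" "j < k"
  shows "c j \<le> n"
proof -
  have "c j \<le> (\<Sum>i<k. c i)" using assms(2) by (intro member_le_sum) auto
  then show ?thesis using assms(1) by simp
qed

lemma col_entropy_pos: "\<forall>j<k. c j \<le> n \<Longrightarrow> 0 < col_entropy k c n"
  unfolding col_entropy_def
  by (intro prod_pos mult_pos_pos zero_less_power self_powr_pos) (auto simp: divide_le_eq_1)

lemma col_entropy_pow:
  assumes s: "(\<Sum>j<k. c j) = n" and n: "0 < n"
  shows "col_entropy k c n ^ n = (\<Prod>j<k. (real (c j) / real n) ^ c j) ^ 2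
    * (\<Prod>j<k. (real (n - c j) / real n) ^ (n - c j))"
proof -
  have "col_entropy k c n ^ n = (\<Prod>j<k. (self_powr (c j / n) ^ 2 * self_powr (1 - c j / n)) ^ n)"
    unfolding col_entropy_def by (rule prod_power_distrib)
  also have "\<dots> = (\<Prod>j<k. ((real (c j) / real n) ^ c j) ^ 2 * (real (n - c j) / real n) ^ (n - c j))"
  proof (rule prod.cong[OF refl])
    fix j assume "j \<in> {..<k}"
    then have "c j \<le> n" by (simp add: col_le_of_sum_eq[OF s])
    then have "(real (c j) / real n) ^ c j = self_powr (c j / n) ^ n"
      and "(real (n - c j) / real n) ^ (n - c j) = self_powr (1 - c j / n) ^ n"
      using self_powr_of_nat_div[of "c j" n] self_powr_of_nat_div[of "n - c j" n] n
      by (simp_all add: of_nat_diff diff_divide_distrib)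
    moreover have "(x ^ 2 * y) ^ n = (x ^ n) ^ 2 * y ^ n" for x y :: real
      by (simp only: power_mult_distrib power_mult[symmetric] mult.commute)
    ultimately show "(self_powr (c j / n) ^ 2 * self_powr (1 - c j / n)) ^ n
        = ((real (c j) / real n) ^ c j) ^ 2 * (real (n - c j) / real n) ^ (n - c j)"
      by simp
  qed
  also have "\<dots> = (\<Prod>j<k. (real (c j) / real n) ^ c j) ^ 2 * (\<Prod>j<k. (real (n - c j) / real n) ^ (n - c j))"
    by (simp only: prod.distrib prod_power_distrib)
  finally show ?thesis .
qed

lemma card_ssyt_syt_upper:
  assumes s: "(\<Sum>j<k. c j) = n" and n: "0 < n"
  shows "card (ssyt_on (col_diagram k c) n) * card (syt_on (col_diagram k c) n) * col_entropy k c n ^ n \<le> 1"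
proof -
  let ?q = "\<Prod>j<k. (real (c j) / real n) ^ c j"
  let ?r = "\<Prod>j<k. (real (n - c j) / real n) ^ (n - c j)"
  let ?S = "real (card (ssyt_on (col_diagram k c) n))" and ?F = "real (card (syt_on (col_diagram k c) n))"
  have q0: "?q \<ge> 0" "?r \<ge> 0" by (auto intro!: prod_nonneg)
  have "?S * (?q * ?r) \<le> (\<Prod>j<k. real (n choose c j)) * (?q * ?r)"
    using card_ssyt_on_le_prod_choose[of k c n] q0 by (intro mult_right_mono) (simp_all flip: of_nat_prod)
  also have "\<dots> = (\<Prod>j<k. real (n choose c j) * ((real (c j) / real n) ^ c j * (real (n - c j) / real n) ^ (n - c j)))"
    by (simp add: prod.distrib)
  also have "\<dots> \<le> 1"
    by (rule prod_le_1) (use choose_mult_bernoulli_le_1 col_le_of_sum_eq[OF s] n in auto)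
  finally have ssyt: "?S * (?q * ?r) \<le> 1" .
  have "(\<Sum>j<k. real (c j) / real n) = 1" using s n by (simp flip: sum_divide_distrib of_nat_sum)
  then have syt: "?F * ?q \<le> 1" using card_syt_on_mult_prod_le_1[of "\<lambda>j. real (c j) / real n" k c n] by simp
  have "?S * ?F * col_entropy k c n ^ n = (?S * (?q * ?r)) * (?F * ?q)"
    using col_entropy_pow[OF s n] by (simp add: power2_eq_square mult_ac)
  also have "\<dots> \<le> 1 * 1" using ssyt syt q0 by (intro mult_mono) auto
  finally show ?thesis by simp
qed

lemma card_ssyt_on_lower:
  assumes s: "(\<Sum>j<k. c j) = n" and n: "0 < n" and c: "antimono_on {..<k} c"
  shows "1 \<le> card (ssyt_on (col_diagram k c) n) * ((\<Prod>j<k. (real (c j) / real n) ^ c j)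
     * (\<Prod>j<k. (real (n - c j) / real n) ^ (n - c j))) * ((exp 1 ^ 2 * (real n + 1) ^ 2) ^ k * (real n + real k) ^ (k * k))"
    (is "1 \<le> ?S * ?qr * (?E * ?K)")
proof -
  have cn: "\<forall>j<k. c j \<le> n" using col_le_of_sum_eq[OF s] by blast
  have "?qr \<ge> 0" "?K > 0" using n by (auto intro!: prod_nonneg mult_nonneg_nonneg)
  have "1 \<le> (\<Prod>j<k. real (n choose c j) * ((real (c j) / real n) ^ c j
      * (real (n - c j) / real n) ^ (n - c j)) * (exp 1 ^ 2 * (real n + 1) ^ 2))"
    by (rule prod_ge_1) (use choose_mult_bernoulli_lower cn n in auto)
  also have "\<dots> = (\<Prod>j<k. real (n choose c j)) / ?K * ?qr * ?E * ?K"
    using \<open>?K > 0\<close> by (simp add: prod.distrib)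
  also have "\<dots> \<le> ?S * ?qr * ?E * ?K"
    using col_weight_ge_prod_choose[OF cn] col_weight_le_card_ssyt_on[OF c cn] \<open>?qr \<ge> 0\<close> \<open>?K > 0\<close>
    by (intro mult_right_mono) auto
  finally show ?thesis by (simp add: mult_ac)
qed

text \<open>Standard tableaux are bounded below through semistandard ones with the larger
  alphabet \<open>{1..n\<^sup>2}\<close>, whose determinantal lower bound is nearly a multinomial coefficient.\<close>

lemma card_syt_on_lower:
  assumes s: "(\<Sum>j<k. c j) = n" and n: "0 < n" and c: "antimono_on {..<k} c"
  shows "((real n - 1) / (real n + 1)) ^ n \<le> card (syt_on (col_diagram k c) n)
     * (\<Prod>j<k. (real (c j) / real n) ^ c j) * ((exp 1 * (real n + 1)) ^ k * (real n + real k) ^ (k * k))"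
    (is "_ \<le> ?F * ?q * (?E * ?K)")
proof -
  define T where "T = n * n"
  let ?fc = "\<Prod>j<k. fact (c j) :: real"
  have cn: "\<forall>j<k. c j \<le> n" using col_le_of_sum_eq[OF s] by blast
  have pos: "?K > 0" "?fc > 0" "real (T + n) ^ n > 0" "?q \<ge> 0"
    using n by (auto intro!: prod_pos prod_nonneg)
  have "(\<Prod>j<k. real (T - n) ^ c j / (fact (c j) * (real n + real k) ^ k)) \<le> col_weight k c T"
    by (rule col_weight_ge_pow[OF cn]) (simp add: T_def)
  also have "\<dots> \<le> card (ssyt_on (col_diagram k c) T)"
    by (rule col_weight_le_card_ssyt_on[OF c]) (use cn in \<open>auto simp: T_def intro: le_trans\<close>)
  also have "\<dots> \<le> ?F * real ((T + n) choose n)"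
    using card_ssyt_on_le_syt_choose[OF c, of T] s by (simp add: card_col_diagram flip: of_nat_mult)
  finally have "real (T - n) ^ n / (?fc * ?K) \<le> ?F * real ((T + n) choose n)"
    using s by (simp add: prod_dividef prod.distrib power_mult flip: power_sum)
  then have "real (T - n) ^ n / (?fc * ?K) * fact n \<le> ?F * real ((T + n) choose n) * fact n"
    by (rule mult_right_mono) simp
  also have "\<dots> \<le> ?F * real (T + n) ^ n"
    using choose_mult_fact_le_pow[of n "T + n"] by (simp add: mult.assoc mult_left_mono)
  finally have "real (T - n) ^ n * fact n \<le> ?F * real (T + n) ^ n * (?fc * ?K)"
    using pos by (simp add: field_simps)
  then have "real (T - n) ^ n * fact n / (real (T + n) ^ n * ?fc)
      \<le> ?F * real (T + n) ^ n * (?fc * ?K) / (real (T + n) ^ n * ?fc)"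
    using pos by (intro divide_right_mono) auto
  also have "\<dots> = ?F * ?K" using pos by (simp add: field_simps)
  also have "real (T - n) ^ n * fact n / (real (T + n) ^ n * ?fc)
      = (real (T - n) / real (T + n)) ^ n * (fact n / ?fc)"
    by (simp only: power_divide times_divide_times_eq)
  also have "real (T - n) / real (T + n) = (real n - 1) / (real n + 1)"
  proof -
    have "real (T - n) = real n * (real n - 1)" "real (T + n) = real n * (real n + 1)"
      unfolding T_def using n by (simp_all add: of_nat_diff algebra_simps)
    then show ?thesis using n by simp
  qed
  finally have ratio: "((real n - 1) / (real n + 1)) ^ n * (fact n / ?fc) \<le> ?F * ?K" .
  have "((real n - 1) / (real n + 1)) ^ n * 1 \<le> ((real n - 1) / (real n + 1)) ^ n * (fact n / ?fc * ?q * ?E)"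
    using multinomial_mult_lower[OF s n] n by (intro mult_left_mono) auto
  also have "\<dots> = (((real n - 1) / (real n + 1)) ^ n * (fact n / ?fc)) * (?q * ?E)" by (simp only: mult_ac)
  also have "\<dots> \<le> (?F * ?K) * (?q * ?E)"
    using ratio pos by (intro mult_right_mono) auto
  finally show ?thesis by (simp add: mult_ac)
qed

lemma card_ssyt_syt_lower:
  assumes s: "(\<Sum>j<k. c j) = n" and n: "0 < n" and c: "antimono_on {..<k} c"
  shows "((real n - 1) / (real n + 1)) ^ n
    \<le> card (ssyt_on (col_diagram k c) n) * card (syt_on (col_diagram k c) n) * col_entropy k c n ^ n * stirling_loss k n"
proof -
  have "((real n - 1) / (real n + 1)) ^ n \<le> 1 * ((real n - 1) / (real n + 1)) ^ n" by simp
  also have "\<dots> \<le> (card (ssyt_on (col_diagram k c) n) * ((\<Prod>j<k. (real (c j) / real n) ^ c j)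
     * (\<Prod>j<k. (real (n - c j) / real n) ^ (n - c j))) * ((exp 1 ^ 2 * (real n + 1) ^ 2) ^ k * (real n + real k) ^ (k * k)))
     * (card (syt_on (col_diagram k c) n) * (\<Prod>j<k. (real (c j) / real n) ^ c j)
       * ((exp 1 * (real n + 1)) ^ k * (real n + real k) ^ (k * k)))"
    using card_ssyt_on_lower[OF assms] card_syt_on_lower[OF assms] n by (intro mult_mono) auto
  also have "\<dots> = card (ssyt_on (col_diagram k c) n) * card (syt_on (col_diagram k c) n) * col_entropy k c n ^ n * stirling_loss k n"
    by (simp add: col_entropy_pow[OF s n] stirling_loss_def power2_eq_square mult_ac)
  finally show ?thesis .
qed

lemma root_card_ssyt_syt_bounds:
  fixes c :: "nat \<Rightarrow> nat"
  assumes s: "(\<Sum>j<k. c j) = n" and n: "2 \<le> n" and c: "antimono_on {..<k} c"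
  defines "Y \<equiv> real (card (ssyt_on (col_diagram k c) n)) * real (card (syt_on (col_diagram k c) n))"
  shows "(real n - 1) / (real n + 1) * stirling_loss k n powr (- 1 / real n) / col_entropy k c n
           \<le> Y powr (1 / real n)"
    and "Y powr (1 / real n) \<le> 1 / col_entropy k c n"
proof -
  let ?E = "col_entropy k c n" and ?R = "(real n - 1) / (real n + 1)"
  have root: "(w ^ n) powr (1 / real n) = w" if "0 \<le> w" for w
    using that n by (simp add: root_powr_inverse[symmetric] real_root_power_cancel)
  have E: "0 < ?E" using col_le_of_sum_eq[OF s] by (intro col_entropy_pos) blast
  have P: "0 < stirling_loss k n" unfolding stirling_loss_def using n by (intro mult_pos_pos zero_less_power) auto
  have "0 \<le> Y" unfolding Y_def by simp
  have "Y \<le> (1 / ?E) ^ n"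
    using card_ssyt_syt_upper[OF s] n E by (simp add: Y_def field_simps)
  then have "Y powr (1 / real n) \<le> ((1 / ?E) ^ n) powr (1 / real n)"
    using \<open>0 \<le> Y\<close> by (intro powr_mono2) auto
  also have "\<dots> = 1 / ?E" using E by (intro root) simp
  finally show "Y powr (1 / real n) \<le> 1 / ?E" .
  have "?R ^ n \<le> Y * (?E ^ n * stirling_loss k n)"
    using card_ssyt_syt_lower[OF s _ c] n by (simp add: Y_def mult.assoc)
  then have "?R ^ n / (?E ^ n * stirling_loss k n) \<le> Y"
    using E P by (subst pos_divide_le_eq) auto
  then have "(?R / ?E) ^ n * (1 / stirling_loss k n) \<le> Y"
    by (simp only: power_divide times_divide_times_eq mult_1_right)
  then have "((?R / ?E) ^ n * (1 / stirling_loss k n)) powr (1 / real n) \<le> Y powr (1 / real n)"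
    using E P n by (intro powr_mono2) auto
  moreover have "((?R / ?E) ^ n * (1 / stirling_loss k n)) powr (1 / real n)
      = ?R / ?E * stirling_loss k n powr (- 1 / real n)"
    using E P n by (simp add: powr_mult root powr_divide powr_minus_divide)
  ultimately show "?R * stirling_loss k n powr (- 1 / real n) / ?E \<le> Y powr (1 / real n)"
    by (simp add: field_simps)
qed

section \<open>Partitions as column data\<close>

lemma less_length_filter_ge_iff:
  fixes lam :: "nat list"
  assumes "sorted_wrt (\<ge>) lam"
  shows "i < length (filter (\<lambda>x. m \<le> x) lam) \<longleftrightarrow> i < length lam \<and> m \<le> lam ! i"
  using assms
proof (induction lam arbitrary: i)
  case (Cons a lam)
  then have sorted: "sorted_wrt (\<ge>) lam" and le_a: "\<forall>x\<in>set lam. x \<le> a" by auto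
  show ?case
  proof (cases "m \<le> a")
    case True
    then show ?thesis using Cons.IH[OF sorted] by (cases i) auto
  next
    case False
    then have "filter (\<lambda>x. m \<le> x) lam = []" using le_a by (auto simp: filter_empty_conv)
    moreover have "\<not> m \<le> (a # lam) ! i" if "i < length (a # lam)"
    proof (cases i)
      case (Suc i')
      then have "lam ! i' \<in> set lam" using that by simp
      then show ?thesis using Suc False le_a by auto
    qed (use False in simp)
    ultimately show ?thesis using False by auto
  qed
qed simp

lemma diagram_eq_col_diagram:
  assumes "is_partition n lam" and "\<forall>x\<in>set lam. x \<le> k"
  shows "diagram lam = col_diagram k (\<lambda>j. conj_part lam (Suc j))"
proof -
  have "sorted_wrt (\<ge>) lam" using assms(1) by (simp add: is_partition_def)
  note len = less_length_filter_ge_iff[OF this]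
  have "lam ! i \<le> k" if "i < length lam" for i using assms(2) that by auto
  then show ?thesis
    unfolding diagram_def col_diagram_def conj_part_def using len by (fastforce simp: Suc_le_eq)
qed

lemma antimono_on_conj_part: "antimono_on {..<k} (\<lambda>j. conj_part lam (Suc j))"
proof -
  have "filter (\<lambda>x. Suc (Suc j) \<le> x) lam = filter (\<lambda>x. Suc (Suc j) \<le> x) (filter (\<lambda>x. Suc j \<le> x) lam)" for j
    by (induction lam) auto
  then show ?thesis
    unfolding antimono_on_lessThan_iff conj_part_def by (metis length_filter_le)
qed

lemma card_diagram: "card (diagram lam) = sum_list lam"
proof -
  have "diagram lam = Sigma {..<length lam} (\<lambda>i. {..<lam ! i})" unfolding diagram_def by auto
  then show ?thesis by (simp add: card_SigmaI sum_list_sum_nth atLeast0LessThan)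
qed

lemma schur_ones_mult_num_syt:
  assumes "is_partition n lam" and "\<forall>x\<in>set lam. x \<le> k"
  defines "c \<equiv> \<lambda>j. conj_part lam (Suc j)"
  shows "schur_ones lam n * num_syt lam
      = card (ssyt_on (col_diagram k c) n) * card (syt_on (col_diagram k c) n)"
    and "(\<Sum>j<k. c j) = n"
proof -
  have "sum_list lam = n" using assms(1) by (simp add: is_partition_def)
  then show "schur_ones lam n * num_syt lam
      = card (ssyt_on (col_diagram k c) n) * card (syt_on (col_diagram k c) n)"
    unfolding schur_ones_def num_syt_def ssyt_eq_ssyt_on syt_eq_syt_on c_def
      diagram_eq_col_diagram[OF assms(1,2)] by simp
  show "(\<Sum>j<k. c j) = n"
    using card_diagram[of lam] \<open>sum_list lam = n\<close>
    unfolding diagram_eq_col_diagram[OF assms(1,2)] card_col_diagram c_def by simp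
qed

section \<open>Limits\<close>

lemma self_powr_tendsto:
  assumes nonneg: "\<And>n. 0 \<le> u n" and lim: "u \<longlonglongrightarrow> L"
  shows "(\<lambda>n. self_powr (u n)) \<longlonglongrightarrow> self_powr L"
proof (cases "L = 0")
  case False
  moreover have "0 \<le> L" using nonneg by (intro LIMSEQ_le_const[OF lim]) auto
  ultimately have "0 < L" by simp
  then have "eventually (\<lambda>n. 0 < u n) sequentially" by (rule order_tendstoD(1)[OF lim])
  then have "eventually (\<lambda>n. u n powr u n = self_powr (u n)) sequentially"
    by eventually_elim (simp add: self_powr_def pow0_def)
  moreover have "(\<lambda>n. u n powr u n) \<longlonglongrightarrow> L powr L"
    using \<open>0 < L\<close> by (intro tendsto_powr[OF lim lim]) simp
  ultimately show ?thesis
    using \<open>0 < L\<close> by (simp add: self_powr_def pow0_def Lim_transform_eventually)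
next
  case True
  have "((\<lambda>x::real. x powr x) \<longlongrightarrow> 1) (at_right 0)" by real_asymp
  show ?thesis
  proof (rule tendstoI)
    fix e :: real assume "0 < e"
    then have "eventually (\<lambda>x. dist (x powr x) 1 < e) (at_right (0 :: real))"
      using tendstoD[OF \<open>((\<lambda>x. x powr x) \<longlongrightarrow> 1) (at_right 0)\<close>] by blast
    then obtain b :: real where b: "0 < b" "\<And>y. 0 < y \<Longrightarrow> y < b \<Longrightarrow> dist (y powr y) 1 < e"
      by (auto simp: eventually_at_right_field)
    have "eventually (\<lambda>n. u n < b) sequentially" using order_tendstoD(2)[OF lim] b True by simp
    then show "eventually (\<lambda>n. dist (self_powr (u n)) (self_powr L) < e) sequentially"
    proof (rule eventually_mono)
      fix n assume "u n < b"
      then show "dist (self_powr (u n)) (self_powr L) < e"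
        using b(2)[of "u n"] nonneg[of n] \<open>0 < e\<close> True
        by (cases "u n = 0") (auto simp: self_powr_def pow0_def)
    qed
  qed
qed

lemma col_entropy_tendsto:
  fixes c :: "nat \<Rightarrow> nat \<Rightarrow> nat"
  assumes le: "\<And>n j. 0 < n \<Longrightarrow> j < k \<Longrightarrow> c n j \<le> n"
    and lim: "\<And>j. j < k \<Longrightarrow> (\<lambda>n. real (c n j) / real n) \<longlonglongrightarrow> x j"
  shows "(\<lambda>n. col_entropy k (c n) n) \<longlonglongrightarrow> (\<Prod>j<k. self_powr (x j) ^ 2 * self_powr (1 - x j))"
  unfolding col_entropy_def
proof (intro tendsto_prod tendsto_mult tendsto_power self_powr_tendsto)
  fix j n assume "j \<in> {..<k}"
  then show "(\<lambda>n. real (c n j) / real n) \<longlonglongrightarrow> x j" "(\<lambda>n. 1 - real (c n j) / real n) \<longlonglongrightarrow> 1 - x j"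
    using lim by (auto intro: tendsto_diff)
  show "0 \<le> real (c n j) / real n" by simp
  show "0 \<le> 1 - real (c n j) / real n"
    using le[of n j] \<open>j \<in> {..<k}\<close> by (cases "n = 0") (auto simp: divide_le_eq_1)
qed

lemma root_card_ssyt_syt_tendsto:
  fixes c :: "nat \<Rightarrow> nat \<Rightarrow> nat"
  assumes sum: "\<And>n. 1 \<le> n \<Longrightarrow> (\<Sum>j<k. c n j) = n" and mono: "\<And>n. antimono_on {..<k} (c n)"
    and lim: "\<And>j. j < k \<Longrightarrow> (\<lambda>n. real (c n j) / real n) \<longlonglongrightarrow> x j"
  shows "(\<lambda>n. (real (card (ssyt_on (col_diagram k (c n)) n)) * real (card (syt_on (col_diagram k (c n)) n)))
      powr (1 / real n)) \<longlonglongrightarrow> 1 / (\<Prod>j<k. self_powr (x j) ^ 2 * self_powr (1 - x j))"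
proof -
  define L where "L = (\<Prod>j<k. self_powr (x j) ^ 2 * self_powr (1 - x j))"
  have bounded: "0 \<le> real (c n j) / real n \<and> real (c n j) / real n \<le> 1" if "j < k" for n j
    using col_le_of_sum_eq[OF sum that] by (cases "n = 0") (auto simp: divide_le_eq_1)
  then have "0 \<le> x j \<and> x j \<le> 1" if "j < k" for j
    using LIMSEQ_le_const[OF lim] LIMSEQ_le_const2[OF lim] that by blast
  then have "0 < L" unfolding L_def by (intro prod_pos mult_pos_pos zero_less_power self_powr_pos) auto
  have E: "(\<lambda>n. col_entropy k (c n) n) \<longlonglongrightarrow> L"
    unfolding L_def using bounded lim by (intro col_entropy_tendsto) (auto simp: divide_le_eq_1)
  have "(\<lambda>n. (real n - 1) / (real n + 1)) \<longlonglongrightarrow> 1" by real_asymp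
  moreover have "(\<lambda>n. stirling_loss k n powr (- 1 / real n)) \<longlonglongrightarrow> 1"
    unfolding stirling_loss_def by real_asymp
  ultimately have lower: "(\<lambda>n. (real n - 1) / (real n + 1) * stirling_loss k n powr (- 1 / real n)
      / col_entropy k (c n) n) \<longlonglongrightarrow> 1 / L"
    using tendsto_divide[OF tendsto_mult E] \<open>0 < L\<close> by fastforce
  have upper: "(\<lambda>n. 1 / col_entropy k (c n) n) \<longlonglongrightarrow> 1 / L"
    using E \<open>0 < L\<close> by (intro tendsto_divide tendsto_const) auto
  note bounds = root_card_ssyt_syt_bounds[OF sum _ mono]
  show ?thesis
    unfolding L_def[symmetric]
    using eventually_mono[OF eventually_ge_at_top[of 2] bounds(1)]
      eventually_mono[OF eventually_ge_at_top[of 2] bounds(2)]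
    by (rule tendsto_sandwich[OF _ _ lower upper]) auto
qed

theorem lemma3p11:
  fixes k :: nat and lam :: "nat \<Rightarrow> nat list" and a :: "nat \<Rightarrow> real"
  assumes "0 < k"
    and "\<And>n. 1 \<le> n \<Longrightarrow> is_partition n (lam n)"
    and "\<And>n. 1 \<le> n \<Longrightarrow> (\<forall>x\<in>set (lam n). x \<le> k)"
    and "\<And>i. 1 \<le> i \<Longrightarrow> i \<le> k \<Longrightarrow>
           (\<lambda>n. real (conj_part (lam n) i) / real n) \<longlonglongrightarrow> a i"
  shows "(\<lambda>n. (real (schur_ones (lam n) n) * real (num_syt (lam n))) powr (1 / real n))
           \<longlonglongrightarrow> (\<Prod>i=1..k. 1 / (pow0 (1 - a i) (1 - a i) * pow0 (a i) (2 * a i)))"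
proof -
  define c where "c n = (\<lambda>j. conj_part (lam n) (Suc j))" for n
  note counts = schur_ones_mult_num_syt[OF assms(2,3), folded c_def]
  have lim: "(\<lambda>n. real (c n j) / real n) \<longlonglongrightarrow> a (Suc j)" if "j < k" for j
    using assms(4)[of "Suc j"] that by (simp add: c_def)
  have "(\<lambda>n. (real (card (ssyt_on (col_diagram k (c n)) n)) * real (card (syt_on (col_diagram k (c n)) n)))
      powr (1 / real n)) \<longlonglongrightarrow> 1 / (\<Prod>j<k. self_powr (a (Suc j)) ^ 2 * self_powr (1 - a (Suc j)))"
    using counts(2) antimono_on_conj_part lim unfolding c_def by (intro root_card_ssyt_syt_tendsto) auto
  then have "(\<lambda>n. (real (schur_ones (lam n) n) * real (num_syt (lam n))) powr (1 / real n))
      \<longlonglongrightarrow> 1 / (\<Prod>j<k. self_powr (a (Suc j)) ^ 2 * self_powr (1 - a (Suc j)))"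
  proof (rule Lim_transform_eventually)
    show "eventually (\<lambda>n. (real (card (ssyt_on (col_diagram k (c n)) n)) * real (card (syt_on (col_diagram k (c n)) n)))
        powr (1 / real n) = (real (schur_ones (lam n) n) * real (num_syt (lam n))) powr (1 / real n)) sequentially"
      using eventually_ge_at_top[of 1] by (rule eventually_mono) (simp add: counts(1) flip: of_nat_mult)
  qed
  moreover have "(\<Prod>i=1..k. 1 / (pow0 (1 - a i) (1 - a i) * pow0 (a i) (2 * a i)))
      = 1 / (\<Prod>j<k. self_powr (a (Suc j)) ^ 2 * self_powr (1 - a (Suc j)))"
  proof -
    have "pow0 (1 - a (Suc j)) (1 - a (Suc j)) * pow0 (a (Suc j)) (2 * a (Suc j))
        = self_powr (a (Suc j)) ^ 2 * self_powr (1 - a (Suc j))" if "j < k" for j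
    proof -
      have "0 \<le> a (Suc j)" using LIMSEQ_le_const[OF lim[OF that]] by simp
      then show ?thesis by (simp add: pow0_double self_powr_def)
    qed
    then show ?thesis by (simp add: prod.atLeast1_atMost_eq prod_dividef)
  qed
  ultimately show ?thesis by simp
qed

end
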